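(* Let $(Z,d,\mu)$, $Q$, $X$, $(\psi_x)$, $T_n$ be as in the context. Suppose $0<s<\infty$, $Q/(Q+s)<p\le\infty$, $0<q\le\infty$. If $u:X\to\mathbb C$ satisfies $|du|\in\mathcal I^s_{p,q}(X)$, then the limit $\mathrm{Tr}\,u:=\lim_{n\to\infty}T_nu$ exists in $L^1_{\rm loc}(Z)$ and pointwise $\mu$-a.e., and for every $x\in X$ there is a constant $C_x$ (depending on $x$ but not on $u$) such that $\|\mathrm{Tr}\,u-u(x)\|_{L^1(B(x))}\le C_x\|\,|du|\,\|_{\mathcal I^s_{p,q}(X)}$.
   Context: $(Z,d,\mu)$ is a metric measure space, $\mu$ Borel regular, every ball has positive finite measure, and $\mu$ is doubling. Fix constants $C\ge1$, $Q>0$ with $\mu(B(\xi,\lambda r)) \le C\lambda^Q\mu(B(\xi,r))$ for all $\xi\in Z$, $r>0$, $\lambda\ge1$. Hyperbolic filling: for each $n\in\mathbb Z$ let $(\xi_x)_{x\in X_n}$ be a maximal set of points of $Z$ with pairwise distances at least $2^{-n-1}$; $X=\bigsqcup_n X_n$, $|x|:=n$ for $x\in X_n$, $B(x):=B(\xi_x,2^{-n})$. Distinct $x,x'\in X$ are neighbors, $x\sim x'$, iff $B(x)\cap B(x')\ne\emptyset$ and $||x|-|x'||\le1$. For $u:X\to\mathbb C$, $|du(x)| := \big(\sum_{x'\sim x}|u(x')-u(x)|^2\big)^{1/2}$. $\mathcal I^s_{p,q}(X)$: sequences $u:X\to\mathbb C$ with $\|u\|_{\mathcal I^s_{p,q}(X)}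 := \big(\sum_{k\in\mathbb Z}2^{ksq}\|\sum_{x\in X_k}|u(x)|\chi_{B(x)}\|_{L^p(Z)}^q\big)^{1/q}<\infty$ (usual modification for $p$ or $q=\infty$). $(\psi_x)_{x\in X}$: non-negative Lipschitz functions with $\psi_x$ supported in $B(x)$, $(\psi_x)_{x\in X_n}$ a partition of unity on $Z$ for each $n$, ${\rm Lip}\,\psi_x\le C''2^{|x|}$. $T_nu:=\sum_{x\in X_n}u(x)\psi_x$. $L^1_{\rm loc}(Z)$: measurable functions integrable on bounded sets. *)

theory Defs
  imports "HOL-Analysis.Analysis" "HOL-Probability.Essential_Supremum"
begin

definition epow :: "ennreal \<Rightarrow> real \<Rightarrow> ennreal" where
  "epow a r = (if a = \<infinity> then \<infinity> else ennreal (enn2real a powr r))"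

definition rad :: "int \<Rightarrow> real" where
  "rad n = 2 powr (- real_of_int n)"

definition separated :: "real \<Rightarrow> 'a::metric_space set \<Rightarrow> bool" where
  "separated r A \<longleftrightarrow> (\<forall>a\<in>A. \<forall>b\<in>A. a \<noteq> b \<longrightarrow> r \<le> dist a b)"

definition max_separated :: "int \<Rightarrow> 'a::metric_space set \<Rightarrow> bool" where
  "max_separated n A \<longleftrightarrow> separated (rad (n+1)) A \<and>
     (\<forall>T. A \<subseteq> T \<longrightarrow> separated (rad (n+1)) T \<longrightarrow> T = A)"

text \<open>Vertices of the hyperbolic filling: a vertex x of level n is encoded as (n, xi_x),
  where S n is the chosen maximal separated set of level n.\<close>
definition HX :: "(int \<Rightarrow> 'a set) \<Rightarrow> (int \<times> 'a) set" where
  "HX S = {(n, \<xi>). \<xi> \<in> S n}"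

definition Bx :: "int \<times> 'a::metric_space \<Rightarrow> 'a set" where
  "Bx x = ball (snd x) (rad (fst x))"

definition nbrs :: "(int \<Rightarrow> 'a::metric_space set) \<Rightarrow> int \<times> 'a \<Rightarrow> (int \<times> 'a) set" where
  "nbrs S x = {y \<in> HX S. y \<noteq> x \<and> Bx x \<inter> Bx y \<noteq> {} \<and> \<bar>fst x - fst y\<bar> \<le> 1}"

definition du :: "(int \<Rightarrow> 'a::metric_space set) \<Rightarrow> (int \<times> 'a \<Rightarrow> complex) \<Rightarrow> int \<times> 'a \<Rightarrow> ennreal" where
  "du S u x = epow (\<integral>\<^sup>+ y. ennreal ((cmod (u y - u x))\<^sup>2) \<partial>count_space (nbrs S x)) (1/2)"

definition Lpn :: "'a measure \<Rightarrow> ennreal \<Rightarrow> ('a \<Rightarrow> ennreal) \<Rightarrow> ennreal" where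
  "Lpn M p g = (if p = \<infinity> then esssup M g
     else epow (\<integral>\<^sup>+ z. epow (g z) (enn2real p) \<partial>M) (1 / enn2real p))"

definition level_fun :: "(int \<Rightarrow> 'a::metric_space set) \<Rightarrow> (int \<times> 'a \<Rightarrow> ennreal) \<Rightarrow> int \<Rightarrow> 'a \<Rightarrow> ennreal" where
  "level_fun S v k z = (\<integral>\<^sup>+ \<xi>. v (k, \<xi>) * indicator (Bx (k, \<xi>)) z \<partial>count_space (S k))"

text \<open>The quasi-norm of I^s_{p,q}(X) for a non-negative sequence v (the norm of u is that of |u|).\<close>
definition Inorm :: "'a::metric_space measure \<Rightarrow> (int \<Rightarrow> 'a set) \<Rightarrow> real \<Rightarrow> ennreal \<Rightarrow> ennreal
     \<Rightarrow> (int \<times> 'a \<Rightarrow> ennreal) \<Rightarrow> ennreal" where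
  "Inorm M S s p q v = (if q = \<infinity>
     then (SUP k. ennreal (2 powr (real_of_int k * s)) * Lpn M p (level_fun S v k))
     else epow (\<integral>\<^sup>+ k. epow (ennreal (2 powr (real_of_int k * s)) * Lpn M p (level_fun S v k)) (enn2real q)
                  \<partial>count_space UNIV) (1 / enn2real q))"

definition Tn :: "(int \<Rightarrow> 'a set) \<Rightarrow> (int \<times> 'a \<Rightarrow> 'a \<Rightarrow> real) \<Rightarrow> int \<Rightarrow> (int \<times> 'a \<Rightarrow> complex) \<Rightarrow> 'a \<Rightarrow> complex" where
  "Tn S \<psi> n u z = infsum (\<lambda>\<xi>. u (n, \<xi>) * complex_of_real (\<psi> (n, \<xi>) z)) (S n)"

end

theory Submission
  imports Defs
begin

text \<open>The increments of \<open>Tn u\<close> are controlled pointwise by the discrete gradient: \<open>Tn u z\<close>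
  is a convex combination of the values of \<open>u\<close> at the vertices of level \<open>n\<close> whose balls contain
  \<open>z\<close>, and these are pairwise neighbours and neighbours of the active vertices of level
  \<open>n + 1\<close>. Hence \<open>|T\<^sub>n\<^sub>+\<^sub>1 u - T\<^sub>n u|\<close> is bounded by the level-\<open>n\<close> sum of \<open>|du|\<close>,
  and \<open>|T\<^sub>n u - u x| \<le> |du| x\<close> on \<open>B x\<close>.
  On a fixed ball of level \<open>m\<close> the integral of the level-\<open>n\<close> sum is at most \<open>2\<^sup>\<kappa>\<^sup>n\<close> times
  the \<open>L\<^sup>p\<close> norm of the level function: \<open>\<kappa> = 0\<close> for \<open>p \<ge> 1\<close> by Hoelder, and
  \<open>\<kappa> = Q (1/p - 1)\<close> for \<open>p < 1\<close>, by comparing each ball of level \<open>n\<close> with a disjoint ball of a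
  quarter of its radius, whose measure doubling bounds from below. The hypothesis
  \<open>p > Q / (Q + s)\<close> means \<open>\<kappa> < s\<close>, so against the weights \<open>2\<^sup>s\<^sup>n\<close> of the
  \<open>I\<^sup>s\<^sub>p\<^sub>,\<^sub>q\<close> norm these bounds decay geometrically: the telescoping series converges in
  \<open>L\<^sup>1\<close> on balls and almost everywhere, with geometric tails.\<close>

lemma rad_pos [simp]: "rad n > 0"
  by (simp add: rad_def)

lemma rad_succ: "rad (n + 1) = rad n / 2"
  by (simp add: rad_def powr_diff powr_minus divide_simps powr_add)

lemma rad_mono: "m \<le> n \<Longrightarrow> rad n \<le> rad m"
  by (simp add: rad_def)

lemma rad_eq_4_rad_add_2: "rad n = 4 * rad (n + 2)"
  using rad_succ[of n] rad_succ[of "n + 1"] by (simp add: algebra_simps)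

lemma rad_divide_rad: "rad m / rad n = 2 powr (real_of_int (n - m))"
  by (simp add: rad_def powr_diff[symmetric] algebra_simps)

lemma ex_rad_ge: "\<exists>m. r \<le> rad m"
proof -
  obtain j :: nat where "r < 2 ^ j"
    using real_arch_pow[of 2 r] by auto
  moreover have "rad (- int j) = 2 ^ j"
    by (simp add: rad_def powr_realpow)
  ultimately show ?thesis
    by (intro exI[of _ "- int j"]) simp
qed

lemma epow_top [simp]: "epow top r = top"
  by (simp add: epow_def)

lemma epow_ennreal: "x \<ge> 0 \<Longrightarrow> epow (ennreal x) r = ennreal (x powr r)"
  by (simp add: epow_def)

lemma epow_mono: "a \<le> b \<Longrightarrow> 0 \<le> r \<Longrightarrow> epow a r \<le> epow b r"
proof (cases "b = \<infinity>")
  case False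
  assume ab: "a \<le> b" and r: "0 \<le> r"
  then have "a \<noteq> \<infinity>"
    using False top.extremum_unique by auto
  then have "enn2real a \<le> enn2real b"
    using ab False by (intro enn2real_mono) (auto simp: less_top)
  then show ?thesis
    using False \<open>a \<noteq> \<infinity>\<close> r unfolding epow_def by (simp add: ennreal_leI powr_mono2)
qed (simp add: epow_def)

lemma epow_epow_inverse: "r > 0 \<Longrightarrow> epow (epow a r) (1 / r) = a"
  by (cases a) (auto simp: epow_ennreal powr_powr epow_def)

lemma sum_le_nn_integral_count_space:
  assumes "finite F" "F \<subseteq> X"
  shows "(\<Sum>x\<in>F. f x) \<le> (\<integral>\<^sup>+x. f x \<partial>count_space X)"
proof -
  have "(\<Sum>x\<in>F. f x) = (\<integral>\<^sup>+x. f x * indicator F x \<partial>count_space X)"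
    using assms
    by (subst nn_integral_count_space_eq[where B = F])
       (auto simp: nn_integral_count_space_finite intro!: sum.cong)
  also have "\<dots> \<le> (\<integral>\<^sup>+x. f x \<partial>count_space X)"
    by (intro nn_integral_mono) (auto simp: indicator_def)
  finally show ?thesis .
qed

lemma le_nn_integral_count_space: "x \<in> X \<Longrightarrow> f x \<le> (\<integral>\<^sup>+x. f x \<partial>count_space X)"
  using sum_le_nn_integral_count_space[of "{x}" X f] by simp

lemma sum_powr_le_powr_sum:
  fixes c :: "'b \<Rightarrow> real"
  assumes "finite F" "\<And>i. i \<in> F \<Longrightarrow> c i \<ge> 0" "r \<ge> 1"
  shows "(\<Sum>i\<in>F. c i powr r) \<le> (\<Sum>i\<in>F. c i) powr r"
proof -
  define T where "T = (\<Sum>i\<in>F. c i)"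
  have "c i powr r \<le> c i * T powr (r - 1)" if i: "i \<in> F" for i
  proof (cases "c i = 0")
    case False
    then have ci: "c i > 0"
      using assms(2)[OF i] by simp
    have "c i \<le> T"
      unfolding T_def using assms i by (intro member_le_sum) auto
    then have "c i powr (r - 1) \<le> T powr (r - 1)"
      using assms ci by (intro powr_mono2) auto
    moreover have "c i powr r = c i * c i powr (r - 1)"
      using ci by (simp add: powr_diff)
    ultimately show ?thesis
      using ci by simp
  qed simp
  then have "(\<Sum>i\<in>F. c i powr r) \<le> (\<Sum>i\<in>F. c i * T powr (r - 1))"
    by (rule sum_mono)
  also have "\<dots> = T * T powr (r - 1)"
    by (simp add: T_def sum_distrib_right)
  also have "\<dots> = T powr r"
    using assms sum_nonneg[of F c] by (cases "T = 0") (simp_all add: T_def powr_diff)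
  finally show ?thesis
    by (simp add: T_def)
qed

lemma le_add_powr_scaled:
  fixes x t P :: real
  assumes "x \<ge> 0" "t > 0" "P \<ge> 1"
  shows "x \<le> t + t powr (1 - P) * x powr P"
proof (cases "x \<le> t")
  case True
  then show ?thesis
    using assms by (smt (verit) mult_nonneg_nonneg powr_ge_zero)
next
  case False
  then have xt: "x / t \<ge> 1"
    using assms by simp
  have "(x / t) powr 1 \<le> (x / t) powr P"
    using xt assms by (intro powr_mono) auto
  then have "x / t \<le> x powr P / t powr P"
    using xt assms by (simp add: powr_divide)
  then have "x \<le> t * (x powr P / t powr P)"
    using assms by (simp add: divide_simps mult.commute)
  also have "\<dots> = t powr (1 - P) * x powr P"
    using assms by (simp add: powr_diff)
  finally show ?thesis
    using assms by simp
qed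

text \<open>As \<open>1 - 1/P < 0\<close>, the lower bound \<open>l \<le> \<mu>\<close> bounds \<open>\<mu> powr (1 - 1/P)\<close> from above.\<close>
lemma mult_le_powr_mult_powr_lower:
  fixes v \<mu> l P :: real
  assumes "v \<ge> 0" "0 < l" "l \<le> \<mu>" "0 < P" "P < 1"
  shows "v * \<mu> \<le> (v powr P * \<mu>) powr (1 / P) * l powr (1 - 1 / P)"
proof -
  have \<mu>: "\<mu> > 0"
    using assms by simp
  have "v * \<mu> = v * \<mu> powr (1 / P) * \<mu> powr (1 - 1 / P)"
    using \<mu> by (simp add: mult.assoc powr_add[symmetric])
  also have "\<dots> \<le> v * \<mu> powr (1 / P) * l powr (1 - 1 / P)"
    using assms by (intro mult_left_mono powr_mono2') (auto simp: field_simps)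
  also have "v * \<mu> powr (1 / P) = (v powr P * \<mu>) powr (1 / P)"
    using assms \<mu> by (simp add: powr_mult powr_powr)
  finally show ?thesis .
qed

lemma set_nn_integral_le_add_powr:
  fixes g :: "'a \<Rightarrow> real"
  assumes g: "g \<in> borel_measurable M" "\<And>z. g z \<ge> 0"
    and B: "B \<in> sets M" "emeasure M B = ennreal \<mu>" "\<mu> \<ge> 0" and P: "P \<ge> 1" and t: "t > 0"
    and I: "(\<integral>\<^sup>+z. ennreal (g z powr P) \<partial>M) = ennreal I" "I \<ge> 0"
  shows "(\<integral>\<^sup>+z\<in>B. ennreal (g z) \<partial>M) \<le> ennreal (t * \<mu> + t powr (1 - P) * I)"
proof -
  have "(\<integral>\<^sup>+z\<in>B. ennreal (g z) \<partial>M)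
      \<le> (\<integral>\<^sup>+z. ennreal t * indicator B z + ennreal (t powr (1 - P)) * ennreal (g z powr P) \<partial>M)"
  proof (intro nn_integral_mono)
    fix z
    have "ennreal (g z) \<le> ennreal (t + t powr (1 - P) * g z powr P)"
      using le_add_powr_scaled[OF g(2) t P] by (rule ennreal_leI)
    then show "ennreal (g z) * indicator B z
        \<le> ennreal t * indicator B z + ennreal (t powr (1 - P)) * ennreal (g z powr P)"
      using t by (auto simp: indicator_def ennreal_plus ennreal_mult)
  qed
  also have "\<dots> = ennreal t * ennreal \<mu> + ennreal (t powr (1 - P)) * ennreal I"
    using g B I by (subst nn_integral_add) (auto simp: nn_integral_cmult_indicator nn_integral_cmult)
  also have "\<dots> = ennreal (t * \<mu> + t powr (1 - P) * I)"
    using t B I by (simp add: ennreal_plus ennreal_mult)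
  finally show ?thesis .
qed

text \<open>Hoelder's inequality against an indicator, with the non-optimal constant 2, obtained by
  choosing \<open>t\<close> in \<open>set_nn_integral_le_add_powr\<close> so that both terms are equal.\<close>
lemma set_nn_integral_le_Lp:
  fixes g :: "'a \<Rightarrow> real"
  assumes g: "g \<in> borel_measurable M" "\<And>z. g z \<ge> 0"
    and B: "B \<in> sets M" "emeasure M B = ennreal \<mu>" "\<mu> > 0" and P: "P \<ge> 1"
  shows "(\<integral>\<^sup>+z\<in>B. ennreal (g z) \<partial>M)
    \<le> ennreal (2 * \<mu> powr (1 - 1 / P)) * epow (\<integral>\<^sup>+z. ennreal (g z powr P) \<partial>M) (1 / P)"
proof (cases "(\<integral>\<^sup>+z. ennreal (g z powr P) \<partial>M) = \<infinity>")
  case True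
  then show ?thesis
    using B by (simp add: ennreal_mult_top)
next
  case False
  then obtain I where I: "(\<integral>\<^sup>+z. ennreal (g z powr P) \<partial>M) = ennreal I" "I \<ge> 0"
    by (cases "\<integral>\<^sup>+z. ennreal (g z powr P) \<partial>M") auto
  note young = set_nn_integral_le_add_powr[OF g B(1,2) less_imp_le[OF B(3)] P _ I]
  show ?thesis
  proof (cases "I = 0")
    case True
    have "(\<integral>\<^sup>+z\<in>B. ennreal (g z) \<partial>M) \<le> 0"
    proof (rule ennreal_le_epsilon)
      fix e :: real
      assume "0 < e"
      then show "(\<integral>\<^sup>+z\<in>B. ennreal (g z) \<partial>M) \<le> 0 + ennreal e"
        using young[where t = "e / \<mu>"] True B by simp
    qed
    then show ?thesis
      by simp
  next
    case False
    define t where "t = (I / \<mu>) powr (1 / P)"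
    have I0: "I > 0"
      using False I by simp
    have t: "t > 0" "t powr P = I / \<mu>"
      using I0 B P by (auto simp: t_def powr_powr)
    have "t * \<mu> = I powr (1 / P) * (\<mu> / \<mu> powr (1 / P))"
      using I0 B by (simp add: t_def powr_divide)
    also have "\<mu> / \<mu> powr (1 / P) = \<mu> powr (1 - 1 / P)"
      using B by (simp add: powr_diff)
    finally have "t * \<mu> = \<mu> powr (1 - 1 / P) * I powr (1 / P)"
      by simp
    moreover have "t powr (1 - P) * I = t * \<mu>"
      using t I0 B by (simp add: powr_diff divide_simps mult.commute)
    ultimately have "(\<integral>\<^sup>+z\<in>B. ennreal (g z) \<partial>M) \<le> ennreal (2 * \<mu> powr (1 - 1 / P) * I powr (1 / P))"
      using young[OF t(1)] by (simp add: mult_ac)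
    then show ?thesis
      using I B by (simp add: epow_ennreal ennreal_mult)
  qed
qed

lemma norm_diff_le_sum_increments:
  fixes T :: "int \<Rightarrow> 'b::real_normed_vector" and G :: "int \<Rightarrow> real"
  assumes D: "\<And>k. norm (T (k + 1) - T k) \<le> G k"
  shows "ennreal (norm (T (k + int j) - T k)) \<le> (\<Sum>i<j. ennreal (G (k + int i)))"
proof (induction j)
  case (Suc j)
  have "norm (T (k + int (Suc j)) - T k)
      \<le> norm (T (k + int j + 1) - T (k + int j)) + norm (T (k + int j) - T k)"
    using norm_triangle_ineq[of "T (k + int j + 1) - T (k + int j)" "T (k + int j) - T k"]
    by (simp add: add_ac)
  also have "\<dots> \<le> G (k + int j) + norm (T (k + int j) - T k)"
    using D by simp
  finally have "ennreal (norm (T (k + int (Suc j)) - T k))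
      \<le> ennreal (G (k + int j) + norm (T (k + int j) - T k))"
    by (rule ennreal_leI)
  also have "\<dots> = ennreal (G (k + int j)) + ennreal (norm (T (k + int j) - T k))"
    using D[of "k + int j"] by (intro ennreal_plus) (auto intro: order.trans[OF norm_ge_zero])
  also have "\<dots> \<le> ennreal (G (k + int j)) + (\<Sum>i<j. ennreal (G (k + int i)))"
    using Suc by (intro add_left_mono)
  finally show ?case
    by (simp add: add.commute)
qed simp

lemma convergent_of_summable_increments:
  fixes T :: "int \<Rightarrow> 'b::banach" and G :: "int \<Rightarrow> real"
  assumes D: "\<And>k. norm (T (k + 1) - T k) \<le> G k" and G: "\<And>k. G k \<ge> 0"
    and fin: "(\<Sum>i. ennreal (G (k0 + int i))) \<noteq> \<infinity>"
  shows "\<exists>L. (T \<longlongrightarrow> L) at_top"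
proof -
  define a where "a i = T (k0 + int i)" for i
  have "summable (\<lambda>i. G (k0 + int i))"
    using fin G by (intro summable_suminf_not_top) auto
  then have "summable (\<lambda>i. a (Suc i) - a i)"
  proof (rule summable_comparison_test[rotated], intro exI allI impI)
    fix i :: nat
    show "norm (a (Suc i) - a i) \<le> G (k0 + int i)"
      using D[of "k0 + int i"] by (simp add: a_def algebra_simps)
  qed
  then have "(\<lambda>j. \<Sum>i<j. a (Suc i) - a i) \<longlonglongrightarrow> (\<Sum>i. a (Suc i) - a i)"
    by (rule summable_LIMSEQ)
  then have "(\<lambda>j. (a j - a 0) + a 0) \<longlonglongrightarrow> (\<Sum>i. a (Suc i) - a i) + a 0"
    by (intro tendsto_add tendsto_const) (simp add: sum_lessThan_telescope)
  then have "a \<longlonglongrightarrow> (\<Sum>i. a (Suc i) - a i) + a 0"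
    by simp
  moreover have "filterlim (\<lambda>k. nat (k - k0)) sequentially at_top"
    unfolding filterlim_at_top
  proof
    fix N :: nat
    show "eventually (\<lambda>k. N \<le> nat (k - k0)) at_top"
      using eventually_ge_at_top[of "k0 + int N"] by eventually_elim linarith
  qed
  ultimately have "((\<lambda>k. a (nat (k - k0))) \<longlongrightarrow> (\<Sum>i. a (Suc i) - a i) + a 0) at_top"
    by (rule filterlim_compose)
  moreover have "eventually (\<lambda>k. a (nat (k - k0)) = T k) at_top"
    using eventually_ge_at_top[of k0] by eventually_elim (simp add: a_def)
  ultimately show ?thesis
    by (blast intro: tendsto_cong[THEN iffD1, rotated])
qed

lemma norm_diff_limit_le_suminf:
  fixes T :: "int \<Rightarrow> 'b::real_normed_vector" and G :: "int \<Rightarrow> real"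
  assumes D: "\<And>k. norm (T (k + 1) - T k) \<le> G k" and L: "(T \<longlongrightarrow> L) at_top"
  shows "ennreal (norm (T k - L)) \<le> (\<Sum>i. ennreal (G (k + int i)))"
proof -
  have "filterlim (\<lambda>j. k + int j) at_top sequentially"
    unfolding filterlim_at_top
  proof
    fix C :: int
    show "eventually (\<lambda>j. C \<le> k + int j) sequentially"
      using eventually_ge_at_top[of "nat (C - k)"] by eventually_elim linarith
  qed
  then have lim: "(\<lambda>j. ennreal (norm (T (k + int j) - T k))) \<longlonglongrightarrow> ennreal (norm (L - T k))"
    by (intro tendsto_ennrealI tendsto_norm tendsto_diff tendsto_const filterlim_compose[OF L])
  have "ennreal (norm (L - T k)) \<le> (\<Sum>i. ennreal (G (k + int i)))"
  proof (rule LIMSEQ_le_const2[OF lim], intro exI allI impI)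
    fix j :: nat
    have "ennreal (norm (T (k + int j) - T k)) \<le> (\<Sum>i<j. ennreal (G (k + int i)))"
      by (rule norm_diff_le_sum_increments[where T = T and G = G, OF D])
    also have "\<dots> \<le> (\<Sum>i. ennreal (G (k + int i)))"
      by (intro sum_le_suminf) auto
    finally show "ennreal (norm (T (k + int j) - T k)) \<le> (\<Sum>i. ennreal (G (k + int i)))" .
  qed
  then show ?thesis
    by (simp add: norm_minus_commute)
qed

lemma two_powr_neg_less_1: "(e::real) > 0 \<Longrightarrow> 2 powr (- e) < 1"
  using powr_less_mono[of "- e" 0 2] by simp

lemma suminf_ennreal_two_powr_neg:
  fixes e a :: real
  assumes e: "e > 0" and a: "a \<ge> 0"
  shows "(\<Sum>i. ennreal (a * 2 powr (- e * real_of_int (n + int i))))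
       = ennreal (a * 2 powr (- e * real_of_int n) / (1 - 2 powr (- e)))"
proof -
  define r where "r = 2 powr (- e)"
  have r: "0 < r" "r < 1"
    using two_powr_neg_less_1[OF e] by (auto simp: r_def)
  have eq: "a * 2 powr (- e * real_of_int (n + int i)) = (a * 2 powr (- e * real_of_int n)) * r ^ i" for i
    by (simp add: r_def powr_realpow[symmetric] powr_powr powr_add[symmetric] algebra_simps)
  have "(\<lambda>i. (a * 2 powr (- e * real_of_int n)) * r ^ i)
      sums ((a * 2 powr (- e * real_of_int n)) * (1 / (1 - r)))"
    using r by (intro sums_mult geometric_sums) auto
  then show ?thesis
    unfolding eq using a by (subst suminf_ennreal_eq) (auto simp: r_def)
qed

lemma tendsto_two_powr_neg_at_top:
  assumes "e > 0"
  shows "((\<lambda>n::int. 2 powr (- e * real_of_int n)) \<longlongrightarrow> 0) at_top"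
proof -
  have "((\<lambda>n::int. (2 powr (- e)) ^ nat n) \<longlongrightarrow> 0) at_top"
    using two_powr_neg_less_1[OF assms]
    by (intro filterlim_compose[OF LIMSEQ_power_zero filterlim_nat_sequentially]) auto
  moreover have "eventually (\<lambda>n::int. (2 powr (- e)) ^ nat n = 2 powr (- e * real_of_int n)) at_top"
    using eventually_ge_at_top[of "0::int"]
    by eventually_elim (simp add: powr_realpow[symmetric] powr_powr)
  ultimately show ?thesis
    by (rule tendsto_cong[THEN iffD1, rotated])
qed

lemma norm_convex_comb_minus_le:
  fixes x :: "'i \<Rightarrow> 'b::real_normed_vector"
  assumes "finite A" "\<And>i. i \<in> A \<Longrightarrow> a i \<ge> 0" "(\<Sum>i\<in>A. a i) = 1"
  shows "norm ((\<Sum>i\<in>A. a i *\<^sub>R x i) - y) \<le> (\<Sum>i\<in>A. a i * norm (x i - y))"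
proof -
  have "(\<Sum>i\<in>A. a i *\<^sub>R x i) - y = (\<Sum>i\<in>A. a i *\<^sub>R (x i - y))"
    using assms(3) by (simp add: scaleR_diff_right sum_subtractf scaleR_sum_left[symmetric])
  also have "norm \<dots> \<le> (\<Sum>i\<in>A. a i * norm (x i - y))"
    using assms(2) by (intro order.trans[OF norm_sum] sum_mono) auto
  finally show ?thesis .
qed

lemma norm_convex_comb_minus_le_const:
  fixes x :: "'i \<Rightarrow> 'b::real_normed_vector"
  assumes "finite A" "\<And>i. i \<in> A \<Longrightarrow> a i \<ge> 0" "(\<Sum>i\<in>A. a i) = 1"
    and "\<And>i. i \<in> A \<Longrightarrow> norm (x i - y) \<le> K"
  shows "norm ((\<Sum>i\<in>A. a i *\<^sub>R x i) - y) \<le> K"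
proof -
  have "norm ((\<Sum>i\<in>A. a i *\<^sub>R x i) - y) \<le> (\<Sum>i\<in>A. a i * norm (x i - y))"
    by (rule norm_convex_comb_minus_le[OF assms(1-3)])
  also have "\<dots> \<le> (\<Sum>i\<in>A. a i * K)"
    using assms by (intro sum_mono mult_left_mono) auto
  also have "\<dots> = K"
    using assms(3) by (simp add: sum_distrib_right[symmetric])
  finally show ?thesis .
qed

lemma HX_iff [simp]: "(n, \<xi>) \<in> HX S \<longleftrightarrow> \<xi> \<in> S n"
  by (simp add: HX_def)

lemma Bx_eq [simp]: "Bx (n, \<xi>) = ball \<xi> (rad n)"
  by (simp add: Bx_def)

locale hyperbolic_filling =
  fixes M :: "'a::metric_space measure" and C Q :: real and S :: "int \<Rightarrow> 'a set"
  assumes space: "space M = UNIV" and sets: "sets M = sets borel"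
    and balls: "\<And>\<xi> r. r > 0 \<Longrightarrow> 0 < emeasure M (ball \<xi> r) \<and> emeasure M (ball \<xi> r) < \<infinity>"
    and C: "C \<ge> 1" and Q: "Q > 0"
    and doubling: "\<And>\<xi> r t. r > 0 \<Longrightarrow> t \<ge> 1 \<Longrightarrow>
        measure M (ball \<xi> (t * r)) \<le> C * t powr Q * measure M (ball \<xi> r)"
    and S: "\<And>n. max_separated n (S n)"
begin

lemma sets_ball [measurable]: "ball c r \<in> sets M"
  using sets by simp

lemma borel_measurable_M: "f \<in> borel_measurable borel \<Longrightarrow> f \<in> borel_measurable M"
  by (simp add: measurable_cong_sets[OF sets refl])

lemma emeasure_ball: "emeasure M (ball c r) = ennreal (measure M (ball c r))"
proof (cases "r > 0")
  case True
  then show ?thesis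
    using balls[of r c] by (intro emeasure_eq_ennreal_measure) auto
qed (simp add: ball_empty)

lemma measure_ball_pos: "r > 0 \<Longrightarrow> measure M (ball c r) > 0"
  using balls[of r c] emeasure_ball[of c r] by auto

lemma measure_ball_mono: "r \<le> R \<Longrightarrow> measure M (ball c r) \<le> measure M (ball c R)"
proof (cases "R > 0")
  case True
  assume "r \<le> R"
  then show ?thesis
    using balls[OF True, of c] by (intro measure_mono_fmeasurable) (auto simp: fmeasurable_def)
qed (simp add: ball_empty)

lemma measure_ball_le_doubling:
  assumes "r > 0" "R \<ge> r" "dist c \<xi> \<le> R"
  shows "measure M (ball c R) \<le> C * (2 * R / r) powr Q * measure M (ball \<xi> r)"
proof -
  have "ball c R \<subseteq> ball \<xi> ((2 * R / r) * r)"
    using assms by (auto simp: dist_commute) (smt (verit) dist_commute dist_triangle)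
  then have "measure M (ball c R) \<le> measure M (ball \<xi> ((2 * R / r) * r))"
    using balls[of "(2 * R / r) * r" \<xi>] assms
    by (intro measure_mono_fmeasurable) (auto simp: fmeasurable_def)
  also have "\<dots> \<le> C * (2 * R / r) powr Q * measure M (ball \<xi> r)"
    using assms by (intro doubling) auto
  finally show ?thesis .
qed

lemma net_separated: "\<xi> \<in> S n \<Longrightarrow> \<eta> \<in> S n \<Longrightarrow> \<xi> \<noteq> \<eta> \<Longrightarrow> rad (n + 1) \<le> dist \<xi> \<eta>"
  using S[of n] unfolding max_separated_def separated_def by blast

lemma disjoint_net_balls: "disjoint_family_on (\<lambda>\<xi>. ball \<xi> (rad (n + 2))) (S n)"
proof (auto simp: disjoint_family_on_def)
  fix \<xi> \<eta> z
  assume "\<xi> \<in> S n" "\<eta> \<in> S n" "\<xi> \<noteq> \<eta>" "dist \<xi> z < rad (n + 2)" "dist \<eta> z < rad (n + 2)"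
  moreover have "2 * rad (n + 2) = rad (n + 1)"
    using rad_succ[of "n + 1"] by (simp add: algebra_simps)
  ultimately show False
    using net_separated[of \<xi> n \<eta>] dist_triangle_less_add[of \<xi> z "rad (n + 2)" \<eta> "rad (n + 2)"]
    by (auto simp: dist_commute)
qed

lemma sum_measure_disjoint_balls_le:
  assumes F: "finite F" "disjoint_family_on (\<lambda>\<xi>. ball \<xi> r) F" and sub: "\<And>\<xi>. \<xi> \<in> F \<Longrightarrow> ball \<xi> r \<subseteq> ball c R"
  shows "(\<Sum>\<xi>\<in>F. measure M (ball \<xi> r)) \<le> measure M (ball c R)"
proof -
  have "ennreal (\<Sum>\<xi>\<in>F. measure M (ball \<xi> r)) = (\<Sum>\<xi>\<in>F. emeasure M (ball \<xi> r))"
    by (simp add: emeasure_ball)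
  also have "\<dots> = emeasure M (\<Union>\<xi>\<in>F. ball \<xi> r)"
    using F by (intro sum_emeasure) auto
  also have "\<dots> \<le> emeasure M (ball c R)"
    using sub by (intro emeasure_mono) auto
  finally show ?thesis
    using measure_nonneg[of M "ball c R"] by (simp add: emeasure_ball ennreal_le_iff2 sum_nonneg) linarith
qed

text \<open>Disjoint balls of radius \<open>rad (n + 2)\<close> around the net points near \<open>c\<close> have measure
  bounded below by doubling, and they fit into a fixed ball, so there are only finitely many.\<close>
lemma finite_net_ball: "finite {\<xi>\<in>S n. dist c \<xi> < R}"
proof (rule ccontr)
  assume inf: "infinite {\<xi>\<in>S n. dist c \<xi> < R}"
  then obtain \<xi>0 where "dist c \<xi>0 < R"
    by (metis (no_types, lifting) empty_Collect_eq finite.emptyI)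
  then have R: "R > 0"
    using zero_le_dist[of c \<xi>0] by linarith
  define r where "r = rad (n + 2)"
  define R' where "R' = R + r"
  define \<delta> where "\<delta> = measure M (ball c R') / (C * (2 * R' / r) powr Q)"
  have r: "r > 0"
    by (simp add: r_def)
  have \<delta>: "\<delta> > 0"
    unfolding \<delta>_def using C r R measure_ball_pos[of R' c] by (intro divide_pos_pos) (auto simp: R'_def)
  have low: "\<delta> \<le> measure M (ball \<xi> r)" if "dist c \<xi> < R" for \<xi>
    using measure_ball_le_doubling[of r R' c \<xi>] that r R C
    by (simp add: \<delta>_def R'_def divide_simps mult.commute)
  define N where "N = nat (ceiling (measure M (ball c R') / \<delta>)) + 1"
  obtain F where F: "finite F" "card F = N" "F \<subseteq> {\<xi>\<in>S n. dist c \<xi> < R}"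
    using infinite_arbitrarily_large[OF inf] by blast
  have "real N * \<delta> = (\<Sum>\<xi>\<in>F. \<delta>)"
    using F by simp
  also have "\<dots> \<le> (\<Sum>\<xi>\<in>F. measure M (ball \<xi> r))"
    using F low by (intro sum_mono) auto
  also have "\<dots> \<le> measure M (ball c R')"
  proof (rule sum_measure_disjoint_balls_le[OF F(1)])
    show "disjoint_family_on (\<lambda>\<xi>. ball \<xi> r) F"
      unfolding r_def by (rule disjoint_family_on_mono[OF _ disjoint_net_balls]) (use F(3) in auto)
    show "ball \<xi> r \<subseteq> ball c R'" if "\<xi> \<in> F" for \<xi>
    proof
      fix x
      assume "x \<in> ball \<xi> r"
      then show "x \<in> ball c R'"
        using that F(3) dist_triangle[of c x \<xi>] by (auto simp: R'_def)
    qed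
  qed
  finally have "real N * \<delta> \<le> measure M (ball c R')" .
  moreover have "measure M (ball c R') / \<delta> < real N"
    unfolding N_def by linarith
  ultimately show False
    using \<delta> by (simp add: divide_simps)
qed

lemma finite_nbrs: "finite (nbrs S x)"
proof -
  have "nbrs S x \<subseteq> (SIGMA k:{fst x - 1 .. fst x + 1}. {\<eta> \<in> S k. dist (snd x) \<eta> < 3 * rad (fst x)})"
  proof
    fix y
    assume y: "y \<in> nbrs S x"
    obtain k \<eta> where yk: "y = (k, \<eta>)"
      by force
    from y obtain z where z: "z \<in> Bx x" "z \<in> Bx y" and k: "\<bar>fst x - k\<bar> \<le> 1" and "\<eta> \<in> S k"
      unfolding nbrs_def yk by (auto simp: HX_def)
    have "rad k \<le> rad (fst x - 1)"
      using k by (intro rad_mono) auto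
    also have "rad (fst x - 1) = 2 * rad (fst x)"
      using rad_succ[of "fst x - 1"] by simp
    finally have "dist (snd x) \<eta> < 3 * rad (fst x)"
      using z dist_triangle[of "snd x" \<eta> z] unfolding yk Bx_def by (auto simp: dist_commute)
    then show "y \<in> (SIGMA k:{fst x - 1 .. fst x + 1}. {\<eta> \<in> S k. dist (snd x) \<eta> < 3 * rad (fst x)})"
      using k \<open>\<eta> \<in> S k\<close> yk by auto
  qed
  moreover have "finite (SIGMA k:{fst x - 1 .. fst x + 1}. {\<eta> \<in> S k. dist (snd x) \<eta> < 3 * rad (fst x)})"
    by (intro finite_SigmaI finite_net_ball) auto
  ultimately show ?thesis
    by (rule finite_subset)
qed

definition active :: "int \<Rightarrow> 'a \<Rightarrow> 'a set" where
  "active n z = {\<xi>\<in>S n. dist z \<xi> < rad n}"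

lemma finite_active [simp]: "finite (active n z)"
  unfolding active_def by (rule finite_net_ball)

lemma active_subset: "active n z \<subseteq> S n"
  unfolding active_def by auto

lemma active_iff: "\<xi> \<in> active n z \<longleftrightarrow> \<xi> \<in> S n \<and> z \<in> Bx (n, \<xi>)"
  unfolding active_def by (auto simp: dist_commute)

end

definition grad_norm :: "(int \<Rightarrow> 'a::metric_space set) \<Rightarrow> (int \<times> 'a \<Rightarrow> complex) \<Rightarrow> int \<times> 'a \<Rightarrow> real" where
  "grad_norm S u x = sqrt (\<Sum>y\<in>nbrs S x. (cmod (u y - u x))\<^sup>2)"

lemma grad_norm_nonneg: "grad_norm S u x \<ge> 0"
  by (simp add: grad_norm_def sum_nonneg)

context hyperbolic_filling
begin

lemma du_eq_grad_norm: "du S u = (\<lambda>x. ennreal (grad_norm S u x))"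
  by (simp add: fun_eq_iff du_def epow_def grad_norm_def sum_nonneg powr_half_sqrt
      nn_integral_count_space_finite[OF finite_nbrs])

lemma norm_diff_nbr_le_grad_norm: "y \<in> nbrs S x \<Longrightarrow> cmod (u y - u x) \<le> grad_norm S u x"
  using member_le_sum[of y "nbrs S x" "\<lambda>y. (cmod (u y - u x))\<^sup>2"] finite_nbrs[of x]
  unfolding grad_norm_def by (metis real_sqrt_abs real_sqrt_le_mono abs_norm_cancel zero_le_power2)

end

locale hyperbolic_filling_pu = hyperbolic_filling M C Q S
  for M :: "'a::metric_space measure" and C Q :: real and S :: "int \<Rightarrow> 'a set" +
  fixes \<psi> :: "int \<times> 'a \<Rightarrow> 'a \<Rightarrow> real" and C'' :: real
  assumes psi_nonneg: "\<And>x z. x \<in> HX S \<Longrightarrow> 0 \<le> \<psi> x z"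
    and psi_supp: "\<And>x z. x \<in> HX S \<Longrightarrow> \<psi> x z \<noteq> 0 \<Longrightarrow> z \<in> Bx x"
    and psi_unity: "\<And>n z. ((\<lambda>\<xi>. \<psi> (n, \<xi>) z) has_sum 1) (S n)"
    and C'': "C'' > 0"
    and psi_lip: "\<And>x z w. x \<in> HX S \<Longrightarrow> \<bar>\<psi> x z - \<psi> x w\<bar> \<le> C'' * 2 powr (real_of_int (fst x)) * dist z w"
begin

lemma psi_eq_0: "\<xi> \<in> S n \<Longrightarrow> \<xi> \<notin> active n z \<Longrightarrow> \<psi> (n, \<xi>) z = 0"
  using psi_supp[of "(n, \<xi>)" z] active_iff by auto

lemma sum_active_psi: "(\<Sum>\<xi>\<in>active n z. \<psi> (n, \<xi>) z) = 1"
proof -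
  have "((\<lambda>\<xi>. \<psi> (n, \<xi>) z) has_sum 1) (active n z)"
    using psi_unity[of n z]
    by (subst has_sum_cong_neutral[where T = "S n"]) (auto simp: active_subset[THEN subsetD] psi_eq_0)
  then show ?thesis
    using has_sum_unique has_sum_finite[OF finite_active] by metis
qed

lemma psi_active_nonneg: "\<xi> \<in> active n z \<Longrightarrow> 0 \<le> \<psi> (n, \<xi>) z"
  using psi_nonneg[of "(n, \<xi>)"] active_subset by auto

lemma psi_active_le_1: "\<xi> \<in> active n z \<Longrightarrow> \<psi> (n, \<xi>) z \<le> 1"
  using member_le_sum[of \<xi> "active n z" "\<lambda>\<xi>. \<psi> (n, \<xi>) z"] psi_active_nonneg sum_active_psi by auto

lemma Tn_eq_sum:
  assumes "finite F" "active n z \<subseteq> F" "F \<subseteq> S n"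
  shows "Tn S \<psi> n u z = (\<Sum>\<xi>\<in>F. \<psi> (n, \<xi>) z *\<^sub>R u (n, \<xi>))"
  unfolding Tn_def using assms
  by (subst infsum_cong_neutral[where T = F and g = "\<lambda>\<xi>. \<psi> (n, \<xi>) z *\<^sub>R u (n, \<xi>)"])
     (auto simp: scaleR_conv_of_real mult.commute, metis psi_eq_0 subsetD)

lemma Tn_eq_sum_active: "Tn S \<psi> n u z = (\<Sum>\<xi>\<in>active n z. \<psi> (n, \<xi>) z *\<^sub>R u (n, \<xi>))"
  by (rule Tn_eq_sum) (auto simp: active_subset)

lemma continuous_on_psi: "\<xi> \<in> S n \<Longrightarrow> continuous_on UNIV (\<psi> (n, \<xi>))"
  using psi_lip[of "(n, \<xi>)"] C''
  by (intro lipschitz_on_continuous_on[where L = "C'' * 2 powr real_of_int n"])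
     (auto simp: lipschitz_on_def dist_real_def)

lemma continuous_on_Tn: "continuous_on UNIV (Tn S \<psi> n u)"
proof -
  have "isCont (Tn S \<psi> n u) z0" for z0
  proof -
    define F where "F = {\<xi>\<in>S n. dist z0 \<xi> < 2 * rad n}"
    have F: "finite F"
      unfolding F_def by (rule finite_net_ball)
    have eq: "Tn S \<psi> n u z = (\<Sum>\<xi>\<in>F. \<psi> (n, \<xi>) z *\<^sub>R u (n, \<xi>))" if z: "z \<in> ball z0 (rad n)" for z
    proof (rule Tn_eq_sum[OF F])
      show "active n z \<subseteq> F"
      proof
        fix \<xi>
        assume "\<xi> \<in> active n z"
        then have "\<xi> \<in> S n" "dist z \<xi> < rad n"
          by (auto simp: active_def)
        then show "\<xi> \<in> F"
          using z dist_triangle[of z0 \<xi> z] by (auto simp: F_def)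
      qed
    qed (auto simp: F_def)
    have "continuous_on (ball z0 (rad n)) (\<lambda>z. \<Sum>\<xi>\<in>F. \<psi> (n, \<xi>) z *\<^sub>R u (n, \<xi>))"
    proof (intro continuous_on_sum continuous_on_scaleR continuous_on_const)
      fix \<xi>
      assume "\<xi> \<in> F"
      then show "continuous_on (ball z0 (rad n)) (\<psi> (n, \<xi>))"
        using continuous_on_subset[OF continuous_on_psi] by (auto simp: F_def)
    qed
    then have "continuous_on (ball z0 (rad n)) (Tn S \<psi> n u)"
      by (rule continuous_on_eq) (simp add: eq)
    then show ?thesis
      using continuous_on_eq_continuous_at[OF open_ball] rad_pos[of n] by (metis centre_in_ball)
  qed
  then show ?thesis
    by (simp add: continuous_at_imp_continuous_on)
qed

lemma borel_measurable_Tn [measurable]: "Tn S \<psi> n u \<in> borel_measurable M"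
  using continuous_on_Tn by (intro borel_measurable_M borel_measurable_continuous_onI)

lemma norm_Tn_le: "cmod (Tn S \<psi> n u z) \<le> (\<Sum>\<xi>\<in>active n z. cmod (u (n, \<xi>)))"
  unfolding Tn_eq_sum_active
proof (rule order.trans[OF norm_sum sum_mono])
  fix \<xi>
  assume "\<xi> \<in> active n z"
  then show "norm (\<psi> (n, \<xi>) z *\<^sub>R u (n, \<xi>)) \<le> cmod (u (n, \<xi>))"
    using psi_active_nonneg psi_active_le_1 by (simp add: mult_left_le_one_le)
qed

lemma norm_Tn_minus_vertex_le:
  assumes "\<xi>0 \<in> S n" "z \<in> Bx (n, \<xi>0)"
  shows "cmod (Tn S \<psi> n u z - u (n, \<xi>0)) \<le> grad_norm S u (n, \<xi>0)"
  unfolding Tn_eq_sum_active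
proof (rule norm_convex_comb_minus_le_const[OF finite_active psi_active_nonneg sum_active_psi])
  fix \<xi>
  assume \<xi>: "\<xi> \<in> active n z"
  show "cmod (u (n, \<xi>) - u (n, \<xi>0)) \<le> grad_norm S u (n, \<xi>0)"
  proof (cases "\<xi> = \<xi>0")
    case False
    then have "(n, \<xi>) \<in> nbrs S (n, \<xi>0)"
      using \<xi> assms unfolding nbrs_def active_iff by (auto simp: HX_def)
    then show ?thesis
      by (rule norm_diff_nbr_le_grad_norm)
  qed (simp add: grad_norm_nonneg)
qed

lemma norm_Tn_succ_minus_vertex_le:
  assumes "\<xi> \<in> active n z"
  shows "cmod (Tn S \<psi> (n + 1) u z - u (n, \<xi>)) \<le> grad_norm S u (n, \<xi>)"
  unfolding Tn_eq_sum_active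
proof (rule norm_convex_comb_minus_le_const[OF finite_active psi_active_nonneg sum_active_psi])
  fix \<eta>
  assume "\<eta> \<in> active (n + 1) z"
  then have "(n + 1, \<eta>) \<in> nbrs S (n, \<xi>)"
    using assms unfolding nbrs_def active_iff by (auto simp: HX_def)
  then show "cmod (u (n + 1, \<eta>) - u (n, \<xi>)) \<le> grad_norm S u (n, \<xi>)"
    by (rule norm_diff_nbr_le_grad_norm)
qed

lemma norm_Tn_succ_minus_Tn_le:
  "cmod (Tn S \<psi> (n + 1) u z - Tn S \<psi> n u z) \<le> (\<Sum>\<xi>\<in>active n z. grad_norm S u (n, \<xi>))"
proof -
  have "cmod (Tn S \<psi> n u z - Tn S \<psi> (n + 1) u z)
      \<le> (\<Sum>\<xi>\<in>active n z. \<psi> (n, \<xi>) z * cmod (u (n, \<xi>) - Tn S \<psi> (n + 1) u z))"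
    unfolding Tn_eq_sum_active[of n]
    by (rule norm_convex_comb_minus_le[OF finite_active psi_active_nonneg sum_active_psi])
  also have "\<dots> \<le> (\<Sum>\<xi>\<in>active n z. grad_norm S u (n, \<xi>))"
  proof (intro sum_mono)
    fix \<xi>
    assume \<xi>: "\<xi> \<in> active n z"
    have "\<psi> (n, \<xi>) z * cmod (u (n, \<xi>) - Tn S \<psi> (n + 1) u z) \<le> \<psi> (n, \<xi>) z * grad_norm S u (n, \<xi>)"
      using norm_Tn_succ_minus_vertex_le[OF \<xi>] psi_active_nonneg[OF \<xi>]
      by (intro mult_left_mono) (auto simp: norm_minus_commute)
    also have "\<dots> \<le> grad_norm S u (n, \<xi>)"
      using psi_active_nonneg[OF \<xi>] psi_active_le_1[OF \<xi>] grad_norm_nonneg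
      by (intro mult_left_le_one_le)
    finally show "\<psi> (n, \<xi>) z * cmod (u (n, \<xi>) - Tn S \<psi> (n + 1) u z) \<le> grad_norm S u (n, \<xi>)" .
  qed
  finally show ?thesis
    by (simp add: norm_minus_commute)
qed

end

lemma level_term_le_Inorm:
  assumes "0 < q"
  shows "ennreal (2 powr (real_of_int n * s)) * Lpn M p (level_fun S v n) \<le> Inorm M S s p q v"
proof (cases "q = \<infinity>")
  case True
  show ?thesis
    unfolding Inorm_def if_P[OF True] by (rule SUP_upper) simp
next
  case False
  define a where "a k = ennreal (2 powr (real_of_int k * s)) * Lpn M p (level_fun S v k)" for k
  have r: "enn2real q > 0"
    using assms False by (simp add: enn2real_positive_iff less_top)
  have "a n = epow (epow (a n) (enn2real q)) (1 / enn2real q)"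
    using r by (simp add: epow_epow_inverse)
  also have "\<dots> \<le> epow (\<integral>\<^sup>+k. epow (a k) (enn2real q) \<partial>count_space UNIV) (1 / enn2real q)"
    using r by (intro epow_mono le_nn_integral_count_space) auto
  also have "\<dots> = Inorm M S s p q v"
    using False by (simp add: Inorm_def a_def)
  finally show ?thesis
    by (simp add: a_def)
qed

context hyperbolic_filling
begin

definition level_sum :: "(int \<times> 'a \<Rightarrow> real) \<Rightarrow> int \<Rightarrow> 'a \<Rightarrow> real" where
  "level_sum v n z = (\<Sum>\<xi>\<in>active n z. v (n, \<xi>))"

definition net_near :: "'a \<Rightarrow> int \<Rightarrow> int \<Rightarrow> 'a set" where
  "net_near c m n = {\<xi>\<in>S n. dist c \<xi> < 2 * rad m}"

text \<open>A finite, hence measurable, sum that agrees with \<open>level_sum v n\<close> on \<open>ball c (rad m)\<close>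
  when \<open>m \<le> n\<close>.\<close>
definition level_sum_near :: "(int \<times> 'a \<Rightarrow> real) \<Rightarrow> 'a \<Rightarrow> int \<Rightarrow> int \<Rightarrow> 'a \<Rightarrow> real" where
  "level_sum_near v c m n z = (\<Sum>\<xi>\<in>net_near c m n. v (n, \<xi>) * indicator (ball \<xi> (rad n)) z)"

lemma finite_net_near [simp]: "finite (net_near c m n)"
  unfolding net_near_def by (rule finite_net_ball)

lemma net_near_subset: "net_near c m n \<subseteq> S n"
  unfolding net_near_def by auto

lemma level_sum_nonneg: "(\<And>x. v x \<ge> 0) \<Longrightarrow> level_sum v n z \<ge> 0"
  unfolding level_sum_def by (simp add: sum_nonneg)

lemma level_sum_near_nonneg: "(\<And>x. v x \<ge> 0) \<Longrightarrow> level_sum_near v c m n z \<ge> 0"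
  unfolding level_sum_near_def by (simp add: sum_nonneg)

lemma borel_measurable_level_sum_near [measurable]: "level_sum_near v c m n \<in> borel_measurable M"
  unfolding level_sum_near_def by measurable

lemma level_sum_near_eq: "level_sum_near v c m n z = (\<Sum>\<xi>\<in>net_near c m n \<inter> active n z. v (n, \<xi>))"
  unfolding level_sum_near_def
  by (subst sum.inter_restrict[OF finite_net_near])
     (auto intro!: sum.cong simp: active_def net_near_def dist_commute indicator_def)

lemma level_sum_near_le: "(\<And>x. v x \<ge> 0) \<Longrightarrow> level_sum_near v c m n z \<le> level_sum v n z"
  unfolding level_sum_near_eq level_sum_def by (intro sum_mono2) auto

lemma active_subset_net_near:
  assumes "m \<le> n" "z \<in> ball c (rad m)"
  shows "active n z \<subseteq> net_near c m n"
proof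
  fix \<xi>
  assume "\<xi> \<in> active n z"
  then show "\<xi> \<in> net_near c m n"
    using assms rad_mono[OF assms(1)] dist_triangle[of c \<xi> z] unfolding active_def net_near_def by auto
qed

lemma level_sum_near_eq_level_sum:
  "m \<le> n \<Longrightarrow> z \<in> ball c (rad m) \<Longrightarrow> level_sum_near v c m n z = level_sum v n z"
  unfolding level_sum_near_eq level_sum_def using active_subset_net_near by (simp add: Int_absorb1)

lemma set_nn_integral_level_sum_eq:
  "m \<le> n \<Longrightarrow> (\<integral>\<^sup>+z\<in>ball c (rad m). ennreal (level_sum v n z) \<partial>M)
     = (\<integral>\<^sup>+z\<in>ball c (rad m). ennreal (level_sum_near v c m n z) \<partial>M)"
  by (intro nn_integral_cong) (auto simp: level_sum_near_eq_level_sum indicator_def)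

lemma level_sum_le_level_fun:
  "(\<And>x. v x \<ge> 0) \<Longrightarrow> ennreal (level_sum v n z) \<le> level_fun S (\<lambda>x. ennreal (v x)) n z"
proof -
  assume v: "\<And>x. v x \<ge> 0"
  have "ennreal (level_sum v n z) = (\<Sum>\<xi>\<in>active n z. ennreal (v (n, \<xi>)) * indicator (Bx (n, \<xi>)) z)"
    unfolding level_sum_def using v by (simp add: active_iff indicator_def)
  also have "\<dots> \<le> level_fun S (\<lambda>x. ennreal (v x)) n z"
    unfolding level_fun_def by (rule sum_le_nn_integral_count_space) (auto simp: active_subset)
  finally show ?thesis .
qed

lemma set_nn_integral_level_sum_le_esssup:
  assumes "\<And>x. v x \<ge> 0"
  shows "(\<integral>\<^sup>+z\<in>ball c (rad m). ennreal (level_sum v n z) \<partial>M)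
    \<le> ennreal (measure M (ball c (rad m))) * esssup M (level_fun S (\<lambda>x. ennreal (v x)) n)"
proof -
  have "(\<integral>\<^sup>+z\<in>ball c (rad m). ennreal (level_sum v n z) \<partial>M)
      \<le> (\<integral>\<^sup>+z. esssup M (level_fun S (\<lambda>x. ennreal (v x)) n) * indicator (ball c (rad m)) z \<partial>M)"
  proof (rule nn_integral_mono_AE)
    show "AE z in M. ennreal (level_sum v n z) * indicator (ball c (rad m)) z
        \<le> esssup M (level_fun S (\<lambda>x. ennreal (v x)) n) * indicator (ball c (rad m)) z"
      using esssup_AE[of "level_fun S (\<lambda>x. ennreal (v x)) n" M]
    proof eventually_elim
      case (elim z)
      then show ?case
        using level_sum_le_level_fun[of v, OF assms, of n z] by (auto simp: indicator_def)
    qed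
  qed
  also have "\<dots> = esssup M (level_fun S (\<lambda>x. ennreal (v x)) n) * emeasure M (ball c (rad m))"
    by (simp add: nn_integral_cmult_indicator)
  finally show ?thesis
    by (simp add: emeasure_ball mult.commute)
qed

lemma set_nn_integral_level_sum_le_Lp:
  assumes v: "\<And>x. v x \<ge> 0" and mn: "m \<le> n" and P: "P \<ge> 1"
  shows "(\<integral>\<^sup>+z\<in>ball c (rad m). ennreal (level_sum v n z) \<partial>M)
    \<le> ennreal (2 * measure M (ball c (rad m)) powr (1 - 1 / P))
      * epow (\<integral>\<^sup>+z. epow (level_fun S (\<lambda>x. ennreal (v x)) n z) P \<partial>M) (1 / P)"
proof -
  have "(\<integral>\<^sup>+z. ennreal (level_sum_near v c m n z powr P) \<partial>M)
      \<le> (\<integral>\<^sup>+z. epow (level_fun S (\<lambda>x. ennreal (v x)) n z) P \<partial>M)"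
  proof (intro nn_integral_mono)
    fix z
    have "ennreal (level_sum_near v c m n z) \<le> level_fun S (\<lambda>x. ennreal (v x)) n z"
      using level_sum_near_le[of v, OF v] level_sum_le_level_fun[of v, OF v] by (meson ennreal_leI order_trans)
    then have "epow (ennreal (level_sum_near v c m n z)) P \<le> epow (level_fun S (\<lambda>x. ennreal (v x)) n z) P"
      using P by (intro epow_mono) auto
    then show "ennreal (level_sum_near v c m n z powr P) \<le> epow (level_fun S (\<lambda>x. ennreal (v x)) n z) P"
      using level_sum_near_nonneg[of v, OF v] by (simp add: epow_ennreal)
  qed
  then have "epow (\<integral>\<^sup>+z. ennreal (level_sum_near v c m n z powr P) \<partial>M) (1 / P)
      \<le> epow (\<integral>\<^sup>+z. epow (level_fun S (\<lambda>x. ennreal (v x)) n z) P \<partial>M) (1 / P)"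
    using P by (intro epow_mono) auto
  moreover have "(\<integral>\<^sup>+z\<in>ball c (rad m). ennreal (level_sum_near v c m n z) \<partial>M)
      \<le> ennreal (2 * measure M (ball c (rad m)) powr (1 - 1 / P))
        * epow (\<integral>\<^sup>+z. ennreal (level_sum_near v c m n z powr P) \<partial>M) (1 / P)"
    using v P measure_ball_pos[of "rad m" c]
    by (intro set_nn_integral_le_Lp) (auto simp: emeasure_ball level_sum_near_nonneg)
  ultimately show ?thesis
    unfolding set_nn_integral_level_sum_eq[OF mn] by (meson mult_left_mono order_trans zero_le)
qed

end

context hyperbolic_filling
begin

text \<open>Doubling lower bound for the measure of the small balls \<open>ball \<xi> (rad (n + 2))\<close>,
  \<open>\<xi> \<in> net_near c m n\<close>; they are pairwise disjoint by \<open>disjoint_net_balls\<close>.\<close>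
definition ball_lower :: "'a \<Rightarrow> int \<Rightarrow> int \<Rightarrow> real" where
  "ball_lower c m n = measure M (ball c (rad m)) / (C * 16 powr Q) * 2 powr (- Q * real_of_int (n - m))"

lemma ball_lower_pos: "ball_lower c m n > 0"
  unfolding ball_lower_def using C measure_ball_pos[of "rad m" c] by simp

lemma ball_lower_le:
  assumes mn: "m \<le> n" and \<xi>: "\<xi> \<in> net_near c m n"
  shows "ball_lower c m n \<le> measure M (ball \<xi> (rad (n + 2)))"
proof -
  define r where "r = rad (n + 2)"
  have r: "r > 0" "rad n = 4 * r"
    unfolding r_def using rad_eq_4_rad_add_2[of n] by auto
  have "r \<le> 2 * rad m"
    using r rad_mono[OF mn] rad_pos[of m] by linarith
  moreover have "dist c \<xi> \<le> 2 * rad m"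
    using \<xi> unfolding net_near_def by auto
  ultimately have "measure M (ball c (2 * rad m)) \<le> C * (2 * (2 * rad m) / r) powr Q * measure M (ball \<xi> r)"
    using r by (intro measure_ball_le_doubling) auto
  moreover have "2 * (2 * rad m) / r = 16 * 2 powr real_of_int (n - m)"
    using r rad_divide_rad[of m n] by (simp add: field_simps)
  moreover have "measure M (ball c (rad m)) \<le> measure M (ball c (2 * rad m))"
    by (rule measure_ball_mono) (simp add: less_imp_le)
  ultimately have "measure M (ball c (rad m)) \<le> C * 16 powr Q * 2 powr (Q * real_of_int (n - m)) * measure M (ball \<xi> r)"
    by (simp add: powr_mult powr_powr mult_ac)
  then show ?thesis
    using C unfolding ball_lower_def r_def by (simp add: powr_minus divide_simps mult_ac)
qed

lemma ball_lower_powr: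
  "ball_lower c m n powr e
    = (measure M (ball c (rad m)) / (C * 16 powr Q)) powr e * 2 powr (- Q * e * real_of_int (n - m))"
proof -
  have "measure M (ball c (rad m)) / (C * 16 powr Q) \<ge> 0"
    using C by simp
  then show ?thesis
    unfolding ball_lower_def by (simp only: powr_mult powr_ge_zero powr_powr) (simp add: mult_ac)
qed

lemma sum_net_near_indicator_le:
  assumes v: "\<And>x. v x \<ge> 0" and P: "P > 0"
  shows "(\<Sum>\<xi>\<in>net_near c m n. ennreal (v (n, \<xi>) powr P) * indicator (ball \<xi> (rad (n + 2))) z)
    \<le> epow (level_fun S (\<lambda>x. ennreal (v x)) n z) P"
proof (cases "\<exists>\<xi>0\<in>net_near c m n. z \<in> ball \<xi>0 (rad (n + 2))")
  case True
  then obtain \<xi>0 where \<xi>0: "\<xi>0 \<in> net_near c m n" "z \<in> ball \<xi>0 (rad (n + 2))"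
    by blast
  have "z \<notin> ball \<xi> (rad (n + 2))" if "\<xi> \<in> net_near c m n - {\<xi>0}" for \<xi>
    using disjoint_net_balls[of n] that \<xi>0 net_near_subset unfolding disjoint_family_on_def by blast
  then have "(\<Sum>\<xi>\<in>net_near c m n. ennreal (v (n, \<xi>) powr P) * indicator (ball \<xi> (rad (n + 2))) z)
      = ennreal (v (n, \<xi>0) powr P)"
    using \<xi>0 by (subst sum.remove[OF finite_net_near \<xi>0(1)]) (auto intro!: sum.neutral)
  also have "\<dots> = epow (ennreal (v (n, \<xi>0))) P"
    using v by (simp add: epow_ennreal)
  also have "\<dots> \<le> epow (level_fun S (\<lambda>x. ennreal (v x)) n z) P"
  proof (intro epow_mono)
    have "rad (n + 2) \<le> rad n"
      by (rule rad_mono) simp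
    then have "z \<in> Bx (n, \<xi>0)"
      using \<xi>0(2) by auto
    then have "ennreal (v (n, \<xi>0)) = ennreal (v (n, \<xi>0)) * indicator (Bx (n, \<xi>0)) z"
      by simp
    also have "\<dots> \<le> level_fun S (\<lambda>x. ennreal (v x)) n z"
      unfolding level_fun_def using \<xi>0(1) net_near_subset
      by (intro le_nn_integral_count_space[where f = "\<lambda>\<xi>. ennreal (v (n, \<xi>)) * indicator (Bx (n, \<xi>)) z"]) auto
    finally show "ennreal (v (n, \<xi>0)) \<le> level_fun S (\<lambda>x. ennreal (v x)) n z" .
  qed (use P in auto)
  finally show ?thesis .
next
  case False
  then have "(\<Sum>\<xi>\<in>net_near c m n. ennreal (v (n, \<xi>) powr P) * indicator (ball \<xi> (rad (n + 2))) z) = 0"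
    by (intro sum.neutral) auto
  then show ?thesis
    by simp
qed

lemma sum_net_near_powr_le:
  assumes v: "\<And>x. v x \<ge> 0" and P: "P > 0"
  shows "ennreal (\<Sum>\<xi>\<in>net_near c m n. v (n, \<xi>) powr P * measure M (ball \<xi> (rad (n + 2))))
    \<le> (\<integral>\<^sup>+z. epow (level_fun S (\<lambda>x. ennreal (v x)) n z) P \<partial>M)"
proof -
  have "ennreal (\<Sum>\<xi>\<in>net_near c m n. v (n, \<xi>) powr P * measure M (ball \<xi> (rad (n + 2))))
      = (\<Sum>\<xi>\<in>net_near c m n. ennreal (v (n, \<xi>) powr P) * emeasure M (ball \<xi> (rad (n + 2))))"
    by (subst sum_ennreal[symmetric]) (auto intro!: sum.cong simp: emeasure_ball ennreal_mult)
  also have "\<dots> = (\<integral>\<^sup>+z. (\<Sum>\<xi>\<in>net_near c m n. ennreal (v (n, \<xi>) powr P) * indicator (ball \<xi> (rad (n + 2))) z) \<partial>M)"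
    by (subst nn_integral_sum) (auto simp: nn_integral_cmult_indicator)
  also have "\<dots> \<le> (\<integral>\<^sup>+z. epow (level_fun S (\<lambda>x. ennreal (v x)) n z) P \<partial>M)"
    by (intro nn_integral_mono sum_net_near_indicator_le[of v, OF v P])
  finally show ?thesis .
qed

lemma set_nn_integral_level_sum_le_nn_integral:
  assumes v: "\<And>x. v x \<ge> 0" and mn: "m \<le> n"
  shows "(\<integral>\<^sup>+z\<in>ball c (rad m). ennreal (level_sum v n z) \<partial>M)
    \<le> ennreal (\<Sum>\<xi>\<in>net_near c m n. v (n, \<xi>) * measure M (ball \<xi> (rad n)))"
proof -
  have "(\<integral>\<^sup>+z\<in>ball c (rad m). ennreal (level_sum_near v c m n z) \<partial>M)
      \<le> (\<integral>\<^sup>+z. (\<Sum>\<xi>\<in>net_near c m n. ennreal (v (n, \<xi>)) * indicator (ball \<xi> (rad n)) z) \<partial>M)"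
    unfolding level_sum_near_def using v
    by (intro nn_integral_mono) (auto simp: indicator_def ennreal_mult sum_nonneg simp flip: sum_ennreal)
  also have "\<dots> = ennreal (\<Sum>\<xi>\<in>net_near c m n. v (n, \<xi>) * measure M (ball \<xi> (rad n)))"
    using v by (subst nn_integral_sum)
      (auto simp: nn_integral_cmult_indicator emeasure_ball ennreal_mult simp flip: sum_ennreal)
  finally show ?thesis
    unfolding set_nn_integral_level_sum_eq[OF mn] .
qed

lemma mult_measure_net_ball_le:
  assumes v: "v \<ge> 0" and mn: "m \<le> n" and \<xi>: "\<xi> \<in> net_near c m n" and P: "0 < P" "P < 1"
  shows "v * measure M (ball \<xi> (rad n))
    \<le> C * 4 powr Q * ((v powr P * measure M (ball \<xi> (rad (n + 2)))) powr (1 / P) * ball_lower c m n powr (1 - 1 / P))"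
proof -
  have "measure M (ball \<xi> (rad n)) \<le> C * 4 powr Q * measure M (ball \<xi> (rad (n + 2)))"
    using doubling[of "rad (n + 2)" 4 \<xi>] rad_eq_4_rad_add_2[of n] by simp
  then have "v * measure M (ball \<xi> (rad n)) \<le> v * (C * 4 powr Q * measure M (ball \<xi> (rad (n + 2))))"
    using v by (rule mult_left_mono)
  also have "\<dots> = C * 4 powr Q * (v * measure M (ball \<xi> (rad (n + 2))))"
    by (simp add: mult_ac)
  also have "\<dots> \<le> C * 4 powr Q * ((v powr P * measure M (ball \<xi> (rad (n + 2)))) powr (1 / P) * ball_lower c m n powr (1 - 1 / P))"
    using v P ball_lower_pos ball_lower_le[OF mn \<xi>] C
    by (intro mult_left_mono mult_le_powr_mult_powr_lower) simp_all
  finally show ?thesis .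
qed

text \<open>For \<open>P < 1\<close> there is no Hoelder inequality; instead each net ball is compared with the
  disjoint small ball inside it, whose measure is at least \<open>ball_lower c m n\<close>, and
  \<open>\<Sum> a\<^sub>i \<le> (\<Sum> a\<^sub>i\<^sup>P)\<^bsup>1/P\<^esup>\<close> is used.\<close>
lemma set_nn_integral_level_sum_le_Lp_lt1:
  assumes v: "\<And>x. v x \<ge> 0" and mn: "m \<le> n" and P: "0 < P" "P < 1"
  shows "(\<integral>\<^sup>+z\<in>ball c (rad m). ennreal (level_sum v n z) \<partial>M)
    \<le> ennreal (C * 4 powr Q * ball_lower c m n powr (1 - 1 / P))
      * epow (\<integral>\<^sup>+z. epow (level_fun S (\<lambda>x. ennreal (v x)) n z) P \<partial>M) (1 / P)"
proof (cases "(\<integral>\<^sup>+z. epow (level_fun S (\<lambda>x. ennreal (v x)) n z) P \<partial>M) = \<infinity>")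
  case True
  then show ?thesis
    using C ball_lower_pos[of c m n] by (simp add: ennreal_mult_top)
next
  case False
  then obtain I where I: "(\<integral>\<^sup>+z. epow (level_fun S (\<lambda>x. ennreal (v x)) n z) P \<partial>M) = ennreal I" "I \<ge> 0"
    by (cases "\<integral>\<^sup>+z. epow (level_fun S (\<lambda>x. ennreal (v x)) n z) P \<partial>M") auto
  define a where "a \<xi> = v (n, \<xi>) powr P * measure M (ball \<xi> (rad (n + 2)))" for \<xi>
  define L where "L = ball_lower c m n"
  have a: "a \<xi> \<ge> 0" for \<xi>
    by (simp add: a_def)
  have L: "L > 0"
    unfolding L_def by (rule ball_lower_pos)
  have bound: "v (n, \<xi>) * measure M (ball \<xi> (rad n)) \<le> C * 4 powr Q * (a \<xi> powr (1 / P) * L powr (1 - 1 / P))"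
    if "\<xi> \<in> net_near c m n" for \<xi>
    unfolding a_def L_def by (rule mult_measure_net_ball_le[OF v mn that P])
  have "(\<Sum>\<xi>\<in>net_near c m n. v (n, \<xi>) * measure M (ball \<xi> (rad n)))
      \<le> (\<Sum>\<xi>\<in>net_near c m n. C * 4 powr Q * L powr (1 - 1 / P) * a \<xi> powr (1 / P))"
    using bound by (intro sum_mono) (simp add: mult_ac)
  also have "\<dots> = C * 4 powr Q * L powr (1 - 1 / P) * (\<Sum>\<xi>\<in>net_near c m n. a \<xi> powr (1 / P))"
    by (simp add: sum_distrib_left)
  also have "(\<Sum>\<xi>\<in>net_near c m n. a \<xi> powr (1 / P)) \<le> (\<Sum>\<xi>\<in>net_near c m n. a \<xi>) powr (1 / P)"
    using P a by (intro sum_powr_le_powr_sum) auto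
  also have "(\<Sum>\<xi>\<in>net_near c m n. a \<xi>) \<le> I"
    using sum_net_near_powr_le[of v, OF v P(1), where c = c and m = m and n = n] I by (simp add: a_def)
  then have "(\<Sum>\<xi>\<in>net_near c m n. a \<xi>) powr (1 / P) \<le> I powr (1 / P)"
    using P a by (intro powr_mono2) (auto simp: sum_nonneg)
  finally have "(\<Sum>\<xi>\<in>net_near c m n. v (n, \<xi>) * measure M (ball \<xi> (rad n)))
      \<le> C * 4 powr Q * L powr (1 - 1 / P) * I powr (1 / P)"
    using C by (simp add: mult_left_mono)
  then have "ennreal (\<Sum>\<xi>\<in>net_near c m n. v (n, \<xi>) * measure M (ball \<xi> (rad n)))
      \<le> ennreal (C * 4 powr Q * L powr (1 - 1 / P)) * epow (ennreal I) (1 / P)"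
    using I C L by (simp add: epow_ennreal ennreal_mult[symmetric] ennreal_leI)
  with set_nn_integral_level_sum_le_nn_integral[of v, OF v mn, where c = c]
  have "(\<integral>\<^sup>+z\<in>ball c (rad m). ennreal (level_sum v n z) \<partial>M)
      \<le> ennreal (C * 4 powr Q * L powr (1 - 1 / P)) * epow (ennreal I) (1 / P)"
    by (rule order.trans)
  then show ?thesis
    unfolding I(1) L_def .
qed

end

context hyperbolic_filling
begin

text \<open>The exponent \<open>\<kappa>\<close> is \<open>0\<close> for \<open>p \<ge> 1\<close> and \<open>Q (1/p - 1)\<close> for \<open>p < 1\<close>; the hypothesis
  \<open>p > Q / (Q + s)\<close> is exactly \<open>\<kappa> < s\<close>.\<close>
lemma set_nn_integral_level_sum_le_Lpn:
  assumes s: "s > 0" and p: "ennreal (Q / (Q + s)) < p"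
  obtains \<kappa> K where "\<kappa> < s" "\<And>c m. K c m \<ge> 0"
    "\<And>v c m n. (\<And>x. v x \<ge> 0) \<Longrightarrow> m \<le> n \<Longrightarrow>
       (\<integral>\<^sup>+z\<in>ball c (rad m). ennreal (level_sum v n z) \<partial>M)
         \<le> ennreal (K c m * 2 powr (\<kappa> * real_of_int n)) * Lpn M p (level_fun S (\<lambda>x. ennreal (v x)) n)"
proof (cases "p = \<infinity>")
  case True
  show ?thesis
    by (rule that[of 0 "\<lambda>c m. measure M (ball c (rad m))"])
       (use s set_nn_integral_level_sum_le_esssup True in \<open>auto simp: Lpn_def\<close>)
next
  case False
  define P where "P = enn2real p"
  have pP: "p = ennreal P"
    using False unfolding P_def by (cases p) auto
  have PQ: "Q / (Q + s) < P"
    using p Q s unfolding pP by (simp add: ennreal_less_iff)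
  have P0: "P > 0"
    using PQ Q s by (smt (verit) divide_pos_pos)
  have Lpn: "Lpn M p g = epow (\<integral>\<^sup>+z. epow (g z) P \<partial>M) (1 / P)" for g
    using False by (simp add: Lpn_def P_def)
  show ?thesis
  proof (cases "P \<ge> 1")
    case True
    show ?thesis
      by (rule that[of 0 "\<lambda>c m. 2 * measure M (ball c (rad m)) powr (1 - 1 / P)"])
         (use s True set_nn_integral_level_sum_le_Lp in \<open>auto simp: Lpn\<close>)
  next
    case False
    define \<kappa> where "\<kappa> = Q * (1 / P - 1)"
    define K where "K c m = C * 4 powr Q * (measure M (ball c (rad m)) / (C * 16 powr Q)) powr (1 - 1 / P)
      * 2 powr (- \<kappa> * real_of_int m)" for c m
    have "Q < P * (Q + s)"
      using PQ Q s by (simp add: field_simps)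
    then have "\<kappa> < s"
      using P0 by (simp add: \<kappa>_def field_simps)
    moreover have "ball_lower c m n powr (1 - 1 / P) * (C * 4 powr Q)
        = K c m * 2 powr (\<kappa> * real_of_int n)" for c m n
      by (simp add: ball_lower_powr K_def \<kappa>_def powr_add[symmetric] algebra_simps)
    ultimately show ?thesis
      using that[of \<kappa> K] set_nn_integral_level_sum_le_Lp_lt1[OF _ _ P0] False C
      by (auto simp: Lpn K_def mult_ac)
  qed
qed

lemma set_nn_integral_level_sum_le_Inorm:
  assumes s: "s > 0" and p: "ennreal (Q / (Q + s)) < p" and q: "0 < q"
  obtains e K where "e > 0" "\<And>c m. K c m \<ge> 0"
    "\<And>v c m n. (\<And>x. v x \<ge> 0) \<Longrightarrow> m \<le> n \<Longrightarrow>
       (\<integral>\<^sup>+z\<in>ball c (rad m). ennreal (level_sum v n z) \<partial>M)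
         \<le> ennreal (K c m * 2 powr (- e * real_of_int n)) * Inorm M S s p q (\<lambda>x. ennreal (v x))"
proof -
  obtain \<kappa> and K :: "'a \<Rightarrow> int \<Rightarrow> real" where \<kappa>: "\<kappa> < s" and K: "\<And>c m. K c m \<ge> 0"
    and est: "\<And>v c m n. (\<And>x. v x \<ge> 0) \<Longrightarrow> m \<le> n \<Longrightarrow>
       (\<integral>\<^sup>+z\<in>ball c (rad m). ennreal (level_sum v n z) \<partial>M)
         \<le> ennreal (K c m * 2 powr (\<kappa> * real_of_int n)) * Lpn M p (level_fun S (\<lambda>x. ennreal (v x)) n)"
    using set_nn_integral_level_sum_le_Lpn[OF s p] by blast
  show ?thesis
  proof (rule that[of "s - \<kappa>" K])
    fix v :: "int \<times> 'a \<Rightarrow> real" and c and m n :: int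
    assume v: "\<And>x. v x \<ge> 0" and mn: "m \<le> n"
    have "ennreal (K c m * 2 powr (\<kappa> * real_of_int n))
        = ennreal (K c m * 2 powr (- (s - \<kappa>) * real_of_int n)) * ennreal (2 powr (real_of_int n * s))"
      using K by (simp add: ennreal_mult[symmetric] powr_add[symmetric] algebra_simps)
    then have "(\<integral>\<^sup>+z\<in>ball c (rad m). ennreal (level_sum v n z) \<partial>M)
        \<le> ennreal (K c m * 2 powr (- (s - \<kappa>) * real_of_int n))
          * (ennreal (2 powr (real_of_int n * s)) * Lpn M p (level_fun S (\<lambda>x. ennreal (v x)) n))"
      using est[of v, OF v mn, where c = c] by (simp add: mult.assoc)
    also have "\<dots> \<le> ennreal (K c m * 2 powr (- (s - \<kappa>) * real_of_int n)) * Inorm M S s p q (\<lambda>x. ennreal (v x))"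
      by (intro mult_left_mono level_term_le_Inorm q) auto
    finally show "(\<integral>\<^sup>+z\<in>ball c (rad m). ennreal (level_sum v n z) \<partial>M)
        \<le> ennreal (K c m * 2 powr (- (s - \<kappa>) * real_of_int n)) * Inorm M S s p q (\<lambda>x. ennreal (v x))" .
  qed (use \<kappa> K in auto)
qed

end

locale trace_construction = hyperbolic_filling_pu M C Q S \<psi> C''
  for M :: "'a::metric_space measure" and C Q :: real and S :: "int \<Rightarrow> 'a set" and \<psi> C'' +
  fixes u :: "int \<times> 'a \<Rightarrow> complex" and e :: real and K :: "'a \<Rightarrow> int \<Rightarrow> real" and N :: ennreal
  assumes e: "e > 0" and K: "\<And>c m. K c m \<ge> 0" and N: "N \<noteq> \<infinity>"
    and level_estimate: "\<And>c m n. m \<le> n \<Longrightarrow>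
      (\<integral>\<^sup>+z\<in>ball c (rad m). ennreal (level_sum (grad_norm S u) n z) \<partial>M)
        \<le> ennreal (K c m * 2 powr (- e * real_of_int n)) * N"
begin

abbreviation "v \<equiv> grad_norm S u"

abbreviation "T k \<equiv> Tn S \<psi> k u"

definition tail_bound :: "'a \<Rightarrow> int \<Rightarrow> int \<Rightarrow> real" where
  "tail_bound c m n = K c m * 2 powr (- e * real_of_int n) / (1 - 2 powr (- e))"

lemma tail_bound_nonneg: "tail_bound c m n \<ge> 0"
  unfolding tail_bound_def using K two_powr_neg_less_1[OF e] by simp

lemma norm_T_succ_minus_T_le: "cmod (T (k + 1) z - T k z) \<le> level_sum v k z"
  unfolding level_sum_def by (rule norm_Tn_succ_minus_Tn_le)

lemma nn_integral_suminf_level_sum_near_le: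
  assumes "m \<le> n"
  shows "(\<integral>\<^sup>+z. (\<Sum>i. ennreal (level_sum_near v c m (n + int i) z) * indicator (ball c (rad m)) z) \<partial>M)
     \<le> ennreal (tail_bound c m n) * N"
proof -
  have "(\<integral>\<^sup>+z. (\<Sum>i. ennreal (level_sum_near v c m (n + int i) z) * indicator (ball c (rad m)) z) \<partial>M)
      = (\<Sum>i. \<integral>\<^sup>+z\<in>ball c (rad m). ennreal (level_sum v (n + int i) z) \<partial>M)"
    using assms by (subst nn_integral_suminf) (auto simp: set_nn_integral_level_sum_eq)
  also have "\<dots> \<le> (\<Sum>i. ennreal (K c m * 2 powr (- e * real_of_int (n + int i))) * N)"
    using assms by (intro suminf_le level_estimate) auto
  also have "\<dots> = ennreal (tail_bound c m n) * N"
    unfolding tail_bound_def using suminf_ennreal_two_powr_neg[OF e K[of c m], of n] by simp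
  finally show ?thesis .
qed

lemma AE_suminf_level_sum_finite:
  "AE z in M. z \<in> ball c (rad m) \<longrightarrow> (\<Sum>i. ennreal (level_sum v (m + int i) z)) \<noteq> \<infinity>"
proof -
  define F where "F z = (\<Sum>i. ennreal (level_sum_near v c m (m + int i) z) * indicator (ball c (rad m)) z)" for z
  have "integral\<^sup>N M F \<le> ennreal (tail_bound c m m) * N"
    unfolding F_def by (rule nn_integral_suminf_level_sum_near_le) simp
  also have "\<dots> < \<infinity>"
    using N by (simp add: ennreal_mult_less_top less_top)
  moreover have "F \<in> borel_measurable M"
    unfolding F_def by measurable
  ultimately have "AE z in M. F z \<noteq> \<infinity>"
    by (intro nn_integral_PInf_AE) auto
  then show ?thesis
    by eventually_elim (auto simp: F_def level_sum_near_eq_level_sum)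
qed

definition Tr :: "'a \<Rightarrow> complex" where
  "Tr z = lim (\<lambda>i::nat. T (int i) z)"

lemma borel_measurable_Tr [measurable]: "Tr \<in> borel_measurable M"
  unfolding Tr_def by measurable

lemma tendsto_Tr:
  assumes "(\<Sum>i. ennreal (level_sum v (k0 + int i) z)) \<noteq> \<infinity>"
  shows "((\<lambda>k. T k z) \<longlongrightarrow> Tr z) at_top"
proof -
  obtain L where L: "((\<lambda>k. T k z) \<longlongrightarrow> L) at_top"
    using convergent_of_summable_increments[OF norm_T_succ_minus_T_le level_sum_nonneg assms]
    by (auto simp: grad_norm_nonneg)
  then have "(\<lambda>i::nat. T (int i) z) \<longlonglongrightarrow> L"
    by (rule filterlim_compose[OF _ filterlim_int_sequentially])
  then show ?thesis
    using L by (simp add: Tr_def limI)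
qed

lemma AE_tendsto_Tr: "AE z in M. ((\<lambda>k. T k z) \<longlongrightarrow> Tr z) at_top"
proof -
  fix c0 :: 'a
  have "AE z in M. \<forall>j::nat. z \<in> ball c0 (rad (- int j)) \<longrightarrow> (\<Sum>i. ennreal (level_sum v (- int j + int i) z)) \<noteq> \<infinity>"
    unfolding AE_all_countable by (intro allI AE_suminf_level_sum_finite)
  then show ?thesis
  proof eventually_elim
    case (elim z)
    obtain j :: nat where "dist c0 z < 2 ^ j"
      using real_arch_pow[of 2 "dist c0 z"] by auto
    moreover have "rad (- int j) = 2 ^ j"
      by (simp add: rad_def powr_realpow)
    ultimately have "z \<in> ball c0 (rad (- int j))"
      by simp
    then have "(\<Sum>i. ennreal (level_sum v (- int j + int i) z)) \<noteq> \<infinity>"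
      using elim by blast
    then show ?case
      by (rule tendsto_Tr)
  qed
qed

lemma AE_norm_T_minus_Tr_le:
  "AE z in M. z \<in> ball c (rad m) \<longrightarrow>
    (\<forall>k \<ge> m. ennreal (cmod (T k z - Tr z)) \<le> (\<Sum>i. ennreal (level_sum_near v c m (k + int i) z)))"
  using AE_suminf_level_sum_finite[of c m]
proof eventually_elim
  case (elim z)
  show ?case
  proof (intro impI allI)
    fix k
    assume z: "z \<in> ball c (rad m)" and k: "k \<ge> m"
    have "ennreal (cmod (T k z - Tr z)) \<le> (\<Sum>i. ennreal (level_sum v (k + int i) z))"
      using elim z tendsto_Tr by (intro norm_diff_limit_le_suminf norm_T_succ_minus_T_le) auto
    also have "\<dots> = (\<Sum>i. ennreal (level_sum_near v c m (k + int i) z))"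
      using z k by (intro suminf_cong) (simp add: level_sum_near_eq_level_sum)
    finally show "ennreal (cmod (T k z - Tr z)) \<le> (\<Sum>i. ennreal (level_sum_near v c m (k + int i) z))" .
  qed
qed

lemma set_nn_integral_T_minus_Tr_le:
  assumes "m \<le> n"
  shows "(\<integral>\<^sup>+z\<in>ball c (rad m). ennreal (cmod (T n z - Tr z)) \<partial>M) \<le> ennreal (tail_bound c m n) * N"
proof -
  have "(\<integral>\<^sup>+z\<in>ball c (rad m). ennreal (cmod (T n z - Tr z)) \<partial>M)
      \<le> (\<integral>\<^sup>+z. (\<Sum>i. ennreal (level_sum_near v c m (n + int i) z) * indicator (ball c (rad m)) z) \<partial>M)"
  proof (rule nn_integral_mono_AE)
    show "AE z in M. ennreal (cmod (T n z - Tr z)) * indicator (ball c (rad m)) z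
        \<le> (\<Sum>i. ennreal (level_sum_near v c m (n + int i) z) * indicator (ball c (rad m)) z)"
      using AE_norm_T_minus_Tr_le[of c m]
    proof eventually_elim
      case (elim z)
      then show ?case
        using assms by (cases "z \<in> ball c (rad m)") auto
    qed
  qed
  also have "\<dots> \<le> ennreal (tail_bound c m n) * N"
    by (rule nn_integral_suminf_level_sum_near_le[OF assms])
  finally show ?thesis .
qed

lemma tendsto_set_nn_integral_T_minus_Tr:
  "((\<lambda>n. \<integral>\<^sup>+ z \<in> ball \<xi> r. ennreal (cmod (T n z - Tr z)) \<partial>M) \<longlongrightarrow> 0) at_top"
proof -
  obtain m where m: "r \<le> rad m"
    using ex_rad_ge by blast
  obtain N' where N': "N = ennreal N'" "N' \<ge> 0"
    using N by (cases N) auto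
  have "((\<lambda>n. tail_bound \<xi> m n * N') \<longlongrightarrow> K \<xi> m * 0 / (1 - 2 powr (- e)) * N') at_top"
    unfolding tail_bound_def by (intro tendsto_intros tendsto_two_powr_neg_at_top e) (use two_powr_neg_less_1[OF e] in auto)
  then have lim: "((\<lambda>n. ennreal (tail_bound \<xi> m n * N')) \<longlongrightarrow> 0) at_top"
    by (intro tendsto_ennrealI[of _ 0, simplified]) simp
  show ?thesis
  proof (rule tendsto_sandwich[OF _ _ tendsto_const lim])
    show "eventually (\<lambda>n. (\<integral>\<^sup>+ z \<in> ball \<xi> r. ennreal (cmod (T n z - Tr z)) \<partial>M)
        \<le> ennreal (tail_bound \<xi> m n * N')) at_top"
      using eventually_ge_at_top[of m]
    proof eventually_elim
      case (elim n)
      have "(\<integral>\<^sup>+ z \<in> ball \<xi> r. ennreal (cmod (T n z - Tr z)) \<partial>M)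
          \<le> (\<integral>\<^sup>+ z \<in> ball \<xi> (rad m). ennreal (cmod (T n z - Tr z)) \<partial>M)"
        using m by (intro nn_integral_mono) (auto simp: indicator_def)
      also have "\<dots> \<le> ennreal (tail_bound \<xi> m n) * N"
        by (rule set_nn_integral_T_minus_Tr_le[OF elim])
      finally show ?case
        using tail_bound_nonneg N' by (simp add: ennreal_mult)
    qed
  qed simp
qed

text \<open>On \<open>ball \<xi> (rad m)\<close>, \<open>Tr\<close> is the bounded function \<open>T m\<close> plus an integrable error.\<close>
lemma set_integrable_Tr: "set_integrable M (ball \<xi> r) Tr"
proof -
  obtain m where m: "r \<le> rad m"
    using ex_rad_ge by blast
  define B where "B = ball \<xi> (rad m)"
  define b where "b = (\<Sum>\<eta>\<in>net_near \<xi> m m. cmod (u (m, \<eta>)))"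
  have Tb: "cmod (T m z) \<le> b" if "z \<in> B" for z
  proof -
    have "cmod (T m z) \<le> (\<Sum>\<eta>\<in>active m z. cmod (u (m, \<eta>)))"
      by (rule norm_Tn_le)
    also have "\<dots> \<le> b"
      unfolding b_def using active_subset_net_near[of m m z \<xi>] that by (intro sum_mono2) (auto simp: B_def)
    finally show ?thesis .
  qed
  have "(\<integral>\<^sup>+z. ennreal (norm (indicator (ball \<xi> r) z *\<^sub>R Tr z)) \<partial>M)
      \<le> (\<integral>\<^sup>+z. ennreal b * indicator B z + ennreal (cmod (T m z - Tr z)) * indicator B z \<partial>M)"
  proof (intro nn_integral_mono)
    fix z
    show "ennreal (norm (indicator (ball \<xi> r) z *\<^sub>R Tr z))
        \<le> ennreal b * indicator B z + ennreal (cmod (T m z - Tr z)) * indicator B z"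
    proof (cases "z \<in> ball \<xi> r")
      case True
      then have z: "z \<in> B"
        using m by (auto simp: B_def)
      have "cmod (Tr z) \<le> b + cmod (T m z - Tr z)"
        using norm_triangle_ineq4[of "T m z" "T m z - Tr z"] Tb[OF z] by simp
      then have "ennreal (cmod (Tr z)) \<le> ennreal (b + cmod (T m z - Tr z))"
        by (rule ennreal_leI)
      also have "\<dots> = ennreal b + ennreal (cmod (T m z - Tr z))"
        using Tb[OF z] by (intro ennreal_plus) (auto intro: order.trans[OF norm_ge_zero])
      finally show ?thesis
        using True z by simp
    qed simp
  qed
  also have "\<dots> = ennreal b * emeasure M B + (\<integral>\<^sup>+z\<in>B. ennreal (cmod (T m z - Tr z)) \<partial>M)"
    by (subst nn_integral_add) (auto simp: nn_integral_cmult_indicator B_def)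
  also have "\<dots> \<le> ennreal b * ennreal (measure M B) + ennreal (tail_bound \<xi> m m) * N"
    unfolding B_def by (intro add_mono set_nn_integral_T_minus_Tr_le) (auto simp: emeasure_ball)
  also have "\<dots> < \<infinity>"
    using N by (simp add: ennreal_mult_eq_top_iff less_top[symmetric])
  finally show ?thesis
    unfolding set_integrable_def by (intro integrableI_bounded) auto
qed

lemma norm_Tr_minus_vertex_le:
  assumes \<xi>0: "\<xi>0 \<in> S n" and z: "z \<in> Bx (n, \<xi>0)"
  shows "ennreal (cmod (Tr z - u (n, \<xi>0)))
    \<le> ennreal (level_sum_near v \<xi>0 n n z) + ennreal (cmod (T n z - Tr z))"
proof -
  have "v (n, \<xi>0) \<le> level_sum v n z"
    unfolding level_sum_def using \<xi>0 z by (intro member_le_sum) (auto simp: active_iff grad_norm_nonneg)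
  also have "\<dots> = level_sum_near v \<xi>0 n n z"
    using z by (simp add: level_sum_near_eq_level_sum)
  finally have "cmod (Tr z - u (n, \<xi>0)) \<le> level_sum_near v \<xi>0 n n z + cmod (T n z - Tr z)"
    using norm_triangle_ineq4[of "T n z - u (n, \<xi>0)" "T n z - Tr z"] norm_Tn_minus_vertex_le[OF \<xi>0 z, of u]
    by simp
  then have "ennreal (cmod (Tr z - u (n, \<xi>0))) \<le> ennreal (level_sum_near v \<xi>0 n n z + cmod (T n z - Tr z))"
    by (rule ennreal_leI)
  also have "\<dots> = ennreal (level_sum_near v \<xi>0 n n z) + ennreal (cmod (T n z - Tr z))"
    using level_sum_near_nonneg[of v, OF grad_norm_nonneg] by (intro ennreal_plus) auto
  finally show ?thesis .
qed

lemma set_nn_integral_Tr_minus_vertex_le: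
  assumes \<xi>0: "\<xi>0 \<in> S n"
  shows "(\<integral>\<^sup>+z\<in>Bx (n, \<xi>0). ennreal (cmod (Tr z - u (n, \<xi>0))) \<partial>M)
      \<le> ennreal (K \<xi>0 n * 2 powr (- e * real_of_int n) * (1 + 1 / (1 - 2 powr (- e)))) * N"
proof -
  define B where "B = ball \<xi>0 (rad n)"
  have "(\<integral>\<^sup>+z\<in>Bx (n, \<xi>0). ennreal (cmod (Tr z - u (n, \<xi>0))) \<partial>M)
      \<le> (\<integral>\<^sup>+z. ennreal (level_sum_near v \<xi>0 n n z) * indicator B z
            + ennreal (cmod (T n z - Tr z)) * indicator B z \<partial>M)"
    using norm_Tr_minus_vertex_le[OF \<xi>0]
    by (intro nn_integral_mono) (auto simp: B_def indicator_def)
  also have "\<dots> = (\<integral>\<^sup>+z\<in>B. ennreal (level_sum v n z) \<partial>M) + (\<integral>\<^sup>+z\<in>B. ennreal (cmod (T n z - Tr z)) \<partial>M)"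
    unfolding B_def by (subst nn_integral_add) (auto simp: set_nn_integral_level_sum_eq)
  also have "\<dots> \<le> ennreal (K \<xi>0 n * 2 powr (- e * real_of_int n)) * N + ennreal (tail_bound \<xi>0 n n) * N"
    unfolding B_def by (intro add_mono level_estimate set_nn_integral_T_minus_Tr_le) simp_all
  also have "\<dots> = ennreal (K \<xi>0 n * 2 powr (- e * real_of_int n) + tail_bound \<xi>0 n n) * N"
    using K tail_bound_nonneg by (simp add: ennreal_plus distrib_right)
  also have "K \<xi>0 n * 2 powr (- e * real_of_int n) + tail_bound \<xi>0 n n
      = K \<xi>0 n * 2 powr (- e * real_of_int n) * (1 + 1 / (1 - 2 powr (- e)))"
    by (simp add: tail_bound_def algebra_simps)
  finally show ?thesis .
qed

end

theorem lemma2p3: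
  fixes M :: "'a::metric_space measure"
    and C Q C'' s :: real
    and p q :: ennreal
    and S :: "int \<Rightarrow> 'a set"
    and \<psi> :: "int \<times> 'a \<Rightarrow> 'a \<Rightarrow> real"
  assumes space: "space M = UNIV" and sets: "sets M = sets borel"
    and balls: "\<And>\<xi> r. r > 0 \<Longrightarrow> 0 < emeasure M (ball \<xi> r) \<and> emeasure M (ball \<xi> r) < \<infinity>"
    and C: "C \<ge> 1" and Q: "Q > 0"
    and doubling: "\<And>\<xi> r t. r > 0 \<Longrightarrow> t \<ge> 1 \<Longrightarrow>
        measure M (ball \<xi> (t * r)) \<le> C * t powr Q * measure M (ball \<xi> r)"
    and S: "\<And>n. max_separated n (S n)"
    and psi_nonneg: "\<And>x z. x \<in> HX S \<Longrightarrow> 0 \<le> \<psi> x z"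
    and psi_supp: "\<And>x z. x \<in> HX S \<Longrightarrow> \<psi> x z \<noteq> 0 \<Longrightarrow> z \<in> Bx x"
    and psi_unity: "\<And>n z. ((\<lambda>\<xi>. \<psi> (n, \<xi>) z) has_sum 1) (S n)"
    and C'': "C'' > 0"
    and psi_lip: "\<And>x z w. x \<in> HX S \<Longrightarrow> \<bar>\<psi> x z - \<psi> x w\<bar> \<le> C'' * 2 powr (real_of_int (fst x)) * dist z w"
    and s: "0 < s"
    and p: "ennreal (Q / (Q + s)) < p"
    and q: "0 < q"
  shows "\<exists>Cx :: int \<times> 'a \<Rightarrow> real. \<forall>u :: int \<times> 'a \<Rightarrow> complex.
     Inorm M S s p q (du S u) < \<infinity> \<longrightarrow>
     (\<exists>Tr :: 'a \<Rightarrow> complex.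
        Tr \<in> borel_measurable M
      \<and> (\<forall>\<xi> r. set_integrable M (ball \<xi> r) Tr)
      \<and> (\<forall>\<xi> r. ((\<lambda>n. \<integral>\<^sup>+ z \<in> ball \<xi> r. ennreal (cmod (Tn S \<psi> n u z - Tr z)) \<partial>M) \<longlongrightarrow> 0) at_top)
      \<and> (AE z in M. ((\<lambda>n. Tn S \<psi> n u z) \<longlongrightarrow> Tr z) at_top)
      \<and> (\<forall>x\<in>HX S. (\<integral>\<^sup>+ z \<in> Bx x. ennreal (cmod (Tr z - u x)) \<partial>M)
             \<le> ennreal (Cx x) * Inorm M S s p q (du S u)))"
proof -
  interpret hyperbolic_filling_pu M C Q S \<psi> C''
    by unfold_locales (fact space sets balls C Q doubling S psi_nonneg psi_supp psi_unity C'' psi_lip)+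
  obtain e K where e: "e > 0" and K: "\<And>c m. K c m \<ge> 0"
    and level_estimate: "\<And>v c m n. (\<And>x. v x \<ge> 0) \<Longrightarrow> m \<le> n \<Longrightarrow>
       (\<integral>\<^sup>+z\<in>ball c (rad m). ennreal (level_sum v n z) \<partial>M)
         \<le> ennreal (K c m * 2 powr (- e * real_of_int n)) * Inorm M S s p q (\<lambda>x. ennreal (v x))"
    using set_nn_integral_level_sum_le_Inorm[OF s p q] by blast
  define Cx where "Cx x = K (snd x) (fst x) * 2 powr (- e * real_of_int (fst x)) * (1 + 1 / (1 - 2 powr (- e)))"
    for x :: "int \<times> 'a"
  show ?thesis
  proof (intro exI[of _ Cx] allI impI, goal_cases)
    case (1 u)
    then interpret trace_construction M C Q S \<psi> C'' u e K "Inorm M S s p q (du S u)"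
      using e K level_estimate[of "grad_norm S u", OF grad_norm_nonneg]
      by unfold_locales (auto simp: du_eq_grad_norm)
    show ?case
      using borel_measurable_Tr set_integrable_Tr tendsto_set_nn_integral_T_minus_Tr AE_tendsto_Tr
        set_nn_integral_Tr_minus_vertex_le
      by (intro exI[of _ Tr]) (auto simp: HX_def Cx_def)
  qed
qed

end
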